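(* Let $q$ be a prime power, let $n$ and $k$ be integers with $1\le k<n/2$, let $V=\mathbb{F}_q^n$, let $U$ be a $k$-dimensional subspace of $V$ and $W$ an $(n-k)$-dimensional subspace with $V=U\oplus W$. Let $t\in M_n(\mathbb{F}_q)$ be an element of type $T_k$ stabilizing $U$ (with respect to $W$). If $T$ is a maximal subring of $M_n(\mathbb{F}_q)$ containing $t$, then either (a) $T=T_U$ or $T=T_W$, where $T_X=\{A\in M_n(\mathbb{F}_q): AX\subseteq X\}$; or (b) $T$ is a maximal subring of Type II-$\ell$, where $\ell$ is a common prime divisor of $k$ and $n$.
   Context: A subring is an additive subgroup closed under multiplication (not necessarily containing the identity); a maximal subring is a proper subring not contained in any other proper subring. A Singer cycle in $\mathrm{GL}(m,q)$ is an element generating a cyclic subgroup of order $q^m-1$. An element $t\in M_n(\mathbb{F}_q)$ is of type $T_k$ stabilizing $U$ (with respect to the complement $W$) if $tU\subseteq U$, $tW\subseteq W$, and, in a basis $e_1,\dots,e_n$ with $e_1,\dots,e_k$ a basis of $U$ and $e_{k+1},\dots,e_n$ a basis of $W$, $t=\begin{pmatrix} S_U & 0\\ 0 & S_W\end{pmatrix}$ with $S_U\in M_k(\mathbb{F}_q)$ and $S_W\in M_{n-k}(\mathbb{F}_q)$ Singer cycles. A maximal subring of $M_n(\mathbb{F}_q)$ is of Type II-$\ell$ if it equals the centralizer $\{A\in M_n(\mathbb{F}_q): Au=uA \text{ for all } u\in K\}$ of a subring $K\subseteq M_n(\mathbb{F}_q)$ with $K\cong\mathbb{F}_{q^\ell}$,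 where $\ell$ is a prime dividing $n$. *)

theory Defs
  imports "HOL-Analysis.Analysis" "HOL-Computational_Algebra.Primes"
begin

text \<open>Matrices in M_n(F_q) are represented as 'a^'n^'n, with 'a a finite field
  (so q = CARD('a) is a prime power) and n = CARD('n). Matrix product is (**),
  a matrix acts on column vectors by (*v).\<close>

definition is_subring :: "('a::field^'n^'n) set \<Rightarrow> bool" where
  "is_subring S \<longleftrightarrow> 0 \<in> S \<and> (\<forall>A\<in>S. \<forall>B\<in>S. A - B \<in> S \<and> A ** B \<in> S)"

definition maximal_subring :: "('a::field^'n^'n) set \<Rightarrow> bool" where
  "maximal_subring S \<longleftrightarrow> is_subring S \<and> S \<noteq> UNIV \<and>
     (\<forall>R. is_subring R \<and> S \<subseteq> R \<and> R \<noteq> UNIV \<longrightarrow> R = S)"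

definition stab_ring :: "('a::field^'n) set \<Rightarrow> ('a^'n^'n) set" where
  "stab_ring X = {A. \<forall>x\<in>X. A *v x \<in> X}"

definition centralizer :: "('a::field^'n^'n) set \<Rightarrow> ('a^'n^'n) set" where
  "centralizer K = {A. \<forall>u\<in>K. A ** u = u ** A}"

text \<open>K (a subring, not necessarily containing the identity matrix) is,
  under the matrix operations, a field with q^l elements, i.e. K is isomorphic to F_{q^l}.\<close>
definition field_subring_of_card :: "('a::{field,finite}^'n^'n) set \<Rightarrow> nat \<Rightarrow> bool" where
  "field_subring_of_card K l \<longleftrightarrow> is_subring K \<and> card K = CARD('a) ^ l \<and>
     (\<exists>e\<in>K. e \<noteq> 0 \<and> (\<forall>x\<in>K. e ** x = x \<and> x ** e = x) \<and>
        (\<forall>x\<in>K. \<forall>y\<in>K. x ** y = y ** x) \<and>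
        (\<forall>x\<in>K. x \<noteq> 0 \<longrightarrow> (\<exists>y\<in>K. x ** y = e)))"

definition typeII :: "('a::{field,finite}^'n^'n) set \<Rightarrow> nat \<Rightarrow> bool" where
  "typeII T l \<longleftrightarrow> maximal_subring T \<and> prime l \<and> l dvd CARD('n) \<and>
     (\<exists>K. field_subring_of_card K l \<and> T = centralizer K)"

definition singer_on :: "('a::{field,finite}^'n^'n) \<Rightarrow> ('a^'n) set \<Rightarrow> bool" where
  "singer_on t X \<longleftrightarrow> (\<forall>x\<in>X. t *v x \<in> X) \<and>
     (let N = CARD('a) ^ vec.dim X - 1 in
       0 < N \<and> (\<forall>x\<in>X. ((\<lambda>v. t *v v) ^^ N) x = x) \<and>
       (\<forall>m. 0 < m \<and> m < N \<longrightarrow> \<not> (\<forall>x\<in>X. ((\<lambda>v. t *v v) ^^ m) x = x)))"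

definition type_T :: "('a::{field,finite}^'n^'n) \<Rightarrow> ('a^'n) set \<Rightarrow> ('a^'n) set \<Rightarrow> bool" where
  "type_T t U W \<longleftrightarrow> (\<forall>u\<in>U. t *v u \<in> U) \<and> (\<forall>w\<in>W. t *v w \<in> W) \<and>
     singer_on t U \<and> singer_on t W"

end

theory Submission
  imports Defs "HOL-Computational_Algebra.Polynomial"
begin

text \<open>The powers of \<open>t\<close> act regularly on the nonzero vectors of \<open>U\<close> and of \<open>W\<close>, because the
  algebra generated by a Singer cycle is a field. Hence a subring \<open>T\<close> containing \<open>t\<close> contains
  the scalars and the two projections of \<open>V = U \<oplus> W\<close>, and its only invariant subspaces are
  among \<open>0\<close>, \<open>U\<close>, \<open>W\<close>, \<open>V\<close>. If \<open>T\<close> stabilizes neither \<open>U\<close> nor \<open>W\<close> it acts irreducibly, so by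
  Burnside's density theorem its centralizer \<open>D\<close> is not just the scalars. By Schur's lemma \<open>D\<close> is a
  finite field, and each of its nonzero elements acts on \<open>U\<close> and on \<open>W\<close> as a power of \<open>t\<close>; so
  \<open>|D| = q ^ m\<close> with \<open>m \<ge> 2\<close> and \<open>q ^ m - 1\<close> dividing \<open>q ^ k - 1\<close> and \<open>q ^ (n - k) - 1\<close>, i.e.
  \<open>m\<close> divides \<open>k\<close> and \<open>n - k\<close>. For a prime \<open>l\<close> dividing \<open>m\<close>, the subfield \<open>K\<close> of \<open>D\<close> with \<open>q ^ l\<close>
  elements has a proper centralizer containing \<open>T\<close>, and maximality gives \<open>T = C(K)\<close>.\<close>

section \<open>Matrix algebra\<close>

lemma mat_add: "mat (a + b) = (mat a + mat b :: 'a::semiring_1^'n^'n)"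
  by (simp add: mat_def vec_eq_iff)

lemma mat_uminus: "mat (- a) = (- mat a :: 'a::ring_1^'n^'n)"
  by (simp add: mat_def vec_eq_iff)

lemma mat_matrix_vector_mult: "mat c *v x = c *s (x :: 'a::comm_semiring_1^'n)"
  by (vector matrix_vector_mult_def mat_def) (simp add: if_distrib if_distribR cong del: if_weak_cong)

lemma mat_mult: "mat (a * b) = (mat a ** mat b :: 'a::comm_semiring_1^'n^'n)"
  by (simp add: matrix_eq mat_matrix_vector_mult flip: matrix_vector_mul_assoc)

lemma mat_commute: "mat c ** A = A ** (mat c :: 'a::comm_semiring_1^'n^'n)"
  by (simp add: matrix_eq mat_matrix_vector_mult flip: matrix_vector_mul_assoc)
    (simp add: matrix_vector_mult_def vector_scalar_mult_def vec_eq_iff sum_distrib_left mult_ac)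

lemma mat_1_neq_0: "(mat 1 :: 'a::zero_neq_one^'n^'n) \<noteq> 0"
proof
  assume "(mat 1 :: 'a^'n^'n) = 0"
  then have "(mat 1 :: 'a^'n^'n) $ i $ i = 0" for i :: 'n by simp
  then show False by (simp add: mat_def)
qed

lemma inj_mat: "inj (mat :: 'a::zero \<Rightarrow> 'a^'n^'n)"
proof (rule injI)
  fix a b :: 'a assume "(mat a :: 'a^'n^'n) = mat b"
  then have "(mat a :: 'a^'n^'n) $ i $ i = mat b $ i $ i" for i :: 'n by simp
  then show "a = b" by (simp add: mat_def)
qed

lemma matrix_add_rdistrib: "(A + B) ** C = A ** C + B ** (C :: 'a::semiring_1^'n^'n)"
  by (simp add: matrix_matrix_mult_def vec_eq_iff sum.distrib distrib_right)

lemma matrix_diff_rdistrib: "(A - B) ** C = A ** C - B ** (C :: 'a::ring_1^'n^'n)"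
  by (simp add: matrix_matrix_mult_def vec_eq_iff sum_subtractf left_diff_distrib)

lemma matrix_diff_ldistrib: "C ** (A - B) = C ** A - C ** (B :: 'a::ring_1^'n^'n)"
  by (simp add: matrix_matrix_mult_def vec_eq_iff sum_subtractf right_diff_distrib)

lemma matrix_minus_left: "(- A) ** C = - (A ** (C :: 'a::ring_1^'n^'n))"
  by (simp add: matrix_matrix_mult_def vec_eq_iff sum_negf)

lemma matrix_vector_mult_minus_left: "(- A) *v x = - (A *v (x :: 'a::ring_1^'n))"
  by (simp add: matrix_vector_mult_def vec_eq_iff sum_negf)

lemma sum_matrix_vector_mult: "(\<Sum>i\<in>S. f i) *v (x :: 'a::semiring_1^'n) = (\<Sum>i\<in>S. f i *v x)"
  by (induction S rule: infinite_finite_induct) (auto simp: matrix_vector_mult_add_rdistrib)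

lemma matrix_eqI_axis:
  fixes A B :: "'a::field^'n^'n"
  assumes "\<And>j. A *v axis j 1 = B *v axis j 1"
  shows "A = B"
proof -
  have "A *v x = B *v x" for x
    using assms by (subst (1 2) basis_expansion[of x, symmetric]) (simp add: vec.sum vec.scale)
  then show ?thesis by (simp add: matrix_eq)
qed

lemma exists_matrix_vector_mult_eq:
  fixes u w :: "'a::field^'n"
  assumes "u \<noteq> 0"
  shows "\<exists>A. A *v u = w"
proof -
  obtain j where j: "u $ j \<noteq> 0" using assms by (auto simp: vec_eq_iff)
  have "(\<chi> r s. if s = j then w $ r / u $ j else 0) *v u = w"
    using j by (simp add: matrix_vector_mult_def vec_eq_iff if_distrib if_distribR sum.delta'
        cong: if_cong)
  then show ?thesis by blast
qed

definition matrix_unit :: "'n \<Rightarrow> 'n \<Rightarrow> 'a::semiring_1^'n^'n" where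
  "matrix_unit i j = (\<chi> r s. if r = i \<and> s = j then 1 else 0)"

lemma matrix_unit_mult_left: "(matrix_unit i j ** A) $ r $ s = (if r = i then A $ j $ s else 0)"
  by (simp add: matrix_unit_def matrix_matrix_mult_def if_distrib if_distribR sum.delta cong: if_cong)

lemma matrix_unit_mult_right: "(A ** matrix_unit i j) $ r $ s = (if s = j then A $ r $ i else 0)"
  by (simp add: matrix_unit_def matrix_matrix_mult_def if_distrib if_distribR sum.delta' cong: if_cong)

lemma central_matrix_is_scalar:
  fixes D :: "'a::semiring_1^'n^'n"
  assumes "\<And>A. A ** D = D ** A"
  shows "\<exists>c. D = mat c"
proof -
  fix i0 :: 'n
  have units: "(matrix_unit i j ** D) $ r $ s = (D ** matrix_unit i j) $ r $ s" for i j r s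
    using assms by simp
  have "D $ j $ j = D $ i $ i" for i j
    using units[of i j i j] by (simp add: matrix_unit_mult_left matrix_unit_mult_right)
  moreover have "D $ r $ i = 0" if "r \<noteq> i" for r i
    using units[of i i r i] that by (simp add: matrix_unit_mult_left matrix_unit_mult_right)
  ultimately have "D = mat (D $ i0 $ i0)"
    unfolding mat_def vec_eq_iff by auto
  then show ?thesis by blast
qed


section \<open>Matrix powers and polynomials of a matrix\<close>

primrec matpow :: "'a::semiring_1^'n^'n \<Rightarrow> nat \<Rightarrow> 'a^'n^'n" where
  "matpow A 0 = mat 1"
| "matpow A (Suc m) = A ** matpow A m"

lemma matpow_add: "matpow A (i + j) = matpow A i ** matpow A j"
  by (induction i) (auto simp: matrix_mul_assoc)

lemma matpow_Suc_right: "matpow A (Suc m) = matpow A m ** A"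
  using matpow_add[of A m 1] by simp

lemma matpow_commute: "matpow A i ** matpow A j = matpow A j ** matpow A i"
  by (metis add.commute matpow_add)

lemma matpow_mult: "matpow A (i * j) = matpow (matpow A i) j"
  by (induction j) (auto simp: matpow_add matpow_commute)

lemma matpow_commute_with:
  assumes "A ** B = B ** A"
  shows "matpow A i ** B = B ** matpow A i"
proof (induction i)
  case (Suc i)
  have "matpow A (Suc i) ** B = A ** (matpow A i ** B)" by (simp add: matrix_mul_assoc)
  also have "\<dots> = (A ** B) ** matpow A i" using Suc by (simp add: matrix_mul_assoc)
  finally show ?case using assms by (simp add: matrix_mul_assoc)
qed simp

lemma matpow_mult_distrib:
  assumes "A ** B = B ** A"
  shows "matpow (A ** B) i = matpow A i ** matpow B i"
proof (induction i)
  case (Suc i)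
  have "matpow (A ** B) (Suc i) = A ** (B ** matpow A i) ** matpow B i"
    using Suc by (simp add: matrix_mul_assoc)
  also have "B ** matpow A i = matpow A i ** B" using matpow_commute_with[OF assms] by simp
  finally show ?case by (simp add: matrix_mul_assoc)
qed simp

lemma matpow_mat: "matpow (mat c :: 'a::comm_semiring_1^'n^'n) i = mat (c ^ i)"
  by (induction i) (simp_all add: mat_mult)

lemma matpow_mat_1: "matpow (mat 1 :: 'a::semiring_1^'n^'n) i = mat 1"
  by (induction i) simp_all

lemma funpow_matrix_vector_mult: "((\<lambda>v. A *v v) ^^ m) x = matpow A m *v x"
  by (induction m) (auto simp: matrix_vector_mul_assoc)

definition poly_mat :: "'a::comm_ring_1 poly \<Rightarrow> 'a^'n^'n \<Rightarrow> 'a^'n^'n" where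
  "poly_mat p A = fold_coeffs (\<lambda>a M. mat a + A ** M) p 0"

lemma poly_mat_0 [simp]: "poly_mat 0 A = 0"
  by (simp add: poly_mat_def)

lemma poly_mat_pCons: "poly_mat (pCons a p) A = mat a + A ** poly_mat p A"
  by (cases "p = 0 \<and> a = 0") (auto simp add: poly_mat_def)

lemma poly_mat_const [simp]: "poly_mat [:c:] A = mat c"
  by (simp add: poly_mat_pCons)

lemma poly_mat_1 [simp]: "poly_mat 1 A = mat 1"
  by (simp add: one_pCons)

lemma poly_mat_add: "poly_mat (p + q) A = poly_mat p A + poly_mat q A"
proof (induction p q rule: poly_induct2)
  case (pCons a p b q)
  then show ?case by (simp add: poly_mat_pCons mat_add matrix_add_ldistrib ac_simps)
qed simp

lemma poly_mat_smult: "poly_mat (smult c p) A = mat c ** poly_mat p A"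
proof (induction p)
  case (pCons a p)
  have "A ** (mat c ** poly_mat p A) = mat c ** (A ** poly_mat p A)"
    by (metis matrix_mul_assoc mat_commute)
  then show ?case by (simp add: poly_mat_pCons pCons mat_mult matrix_add_ldistrib)
qed simp

lemma poly_mat_mult: "poly_mat (p * q) A = poly_mat p A ** poly_mat q A"
proof (induction p)
  case (pCons a p)
  have "poly_mat (pCons a p * q) A = poly_mat (smult a q) A + poly_mat (pCons 0 (p * q)) A"
    by (simp add: poly_mat_add)
  also have "\<dots> = mat a ** poly_mat q A + A ** (poly_mat p A ** poly_mat q A)"
    using pCons by (simp add: poly_mat_smult poly_mat_pCons)
  finally show ?case by (simp add: poly_mat_pCons matrix_add_rdistrib matrix_mul_assoc)
qed simp

lemma poly_mat_diff: "poly_mat (p - q) A = poly_mat p A - poly_mat q A"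
proof -
  have "poly_mat (- q) A = - poly_mat q A"
    using poly_mat_smult[of "-1" q A] by (simp add: mat_uminus matrix_minus_left)
  then show ?thesis using poly_mat_add[of p "- q" A] by simp
qed

lemma poly_mat_monom: "poly_mat (monom 1 i) A = matpow A i"
  by (induction i) (simp_all add: monom_0 monom_Suc poly_mat_pCons)

lemma poly_mat_commute: "poly_mat p A ** poly_mat q A = poly_mat q A ** poly_mat p A"
  by (simp only: poly_mat_mult[symmetric] mult.commute)

lemma poly_mat_pcompose: "poly_mat (pcompose p r) A = poly_mat p (poly_mat r A)"
  by (induction p) (simp_all add: pcompose_pCons poly_mat_add poly_mat_mult poly_mat_pCons)

lemma matpow_poly_mat: "matpow (poly_mat p A) i = poly_mat (p ^ i) A"
  by (induction i) (simp_all add: poly_mat_mult)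

lemma poly_mat_eq_on_invariant_subspace:
  assumes "vec.subspace X" "\<forall>x\<in>X. B *v x \<in> X" "\<forall>x\<in>X. C *v x = B *v x"
  shows "\<forall>x\<in>X. poly_mat p C *v x = poly_mat p B *v x \<and> poly_mat p B *v x \<in> X"
proof (induction p)
  case (pCons a p)
  then show ?case
    using assms
    by (simp add: poly_mat_pCons matrix_vector_mult_add_rdistrib mat_matrix_vector_mult
        vec.subspace_add vec.subspace_scale flip: matrix_vector_mul_assoc)
qed (simp add: vec.subspace_0[OF assms(1)])


section \<open>Finite fields and the Frobenius map\<close>

lemma of_nat_CARD_eq_0: "of_nat CARD('a::{field,finite}) = (0::'a)"
proof -
  have "(\<Sum>c\<in>UNIV. c) = (\<Sum>c\<in>UNIV. c + (1::'a))"
    by (rule sum.reindex_bij_witness[of _ "\<lambda>c. c + 1" "\<lambda>c. c - 1"]) auto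
  also have "\<dots> = (\<Sum>c\<in>UNIV. c) + of_nat CARD('a)"
    by (simp add: sum.distrib)
  finally show ?thesis by simp
qed

lemma power_CARD_eq_same: "(c::'a::{field,finite}) ^ CARD('a) = c"
proof (cases "c = 0")
  case False
  have "(\<Prod>x\<in>UNIV-{0}. x) = (\<Prod>x\<in>UNIV-{0}. c * x)"
    by (rule prod.reindex_bij_witness[of _ "\<lambda>y. c * y" "\<lambda>y. y / c"]) (use False in auto)
  then have "c ^ (CARD('a) - 1) = 1"
    by (simp add: prod.distrib card_Diff_subset)
  moreover have "CARD('a) = Suc (CARD('a) - 1)"
    using finite_UNIV_card_ge_0[where 'a='a] by simp
  ultimately show ?thesis by (metis power_Suc mult_1_right)
qed (simp add: zero_power)

lemma power_CARD_power_eq_same: "(c::'a::{field,finite}) ^ (CARD('a) ^ j) = c"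
  by (induction j) (simp_all add: power_CARD_eq_same power_mult)

lemma of_nat_CARD_choose_eq_0:
  assumes "0 < i" "i < CARD('a::{field,finite})"
  shows "of_nat (CARD('a) choose i) = (0::'a)"
proof -
  let ?q = "CARD('a)"
  \<comment> \<open>Both sides agree at all \<open>q\<close> points of the field, since \<open>c ^ q = c\<close>.\<close>
  have "([:1, 1:] :: 'a poly) ^ ?q = monom 1 ?q + 1"
  proof (rule poly_eqI_degree_lead_coeff[where n = ?q and A = UNIV])
    show "degree ([:1, 1:] ^ ?q :: 'a poly) \<le> ?q"
      using degree_power_le[of "[:1, 1:] :: 'a poly" ?q] by simp
    show "degree (monom 1 ?q + 1 :: 'a poly) \<le> ?q"
      by (simp add: degree_add_le degree_monom_le)
    show "poly ([:1, 1:] ^ ?q) z = poly (monom 1 ?q + 1) z" for z :: 'a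
      by (simp add: poly_monom power_CARD_eq_same add.commute)
  qed (use assms in \<open>simp_all add: coeff_linear_poly_power coeff_1\<close>)
  then have "coeff ([:1, 1:] ^ ?q :: 'a poly) i = coeff (monom 1 ?q + 1 :: 'a poly) i"
    by simp
  then show ?thesis using assms by (simp add: coeff_linear_poly_power coeff_1)
qed

lemma poly_power_CARD_add:
  fixes a b :: "'a::{field,finite} poly"
  shows "(a + b) ^ CARD('a) = a ^ CARD('a) + b ^ CARD('a)"
proof -
  let ?q = "CARD('a)"
  have "(a + b) ^ ?q = (\<Sum>k\<le>?q. of_nat (?q choose k) * a ^ k * b ^ (?q - k))"
    by (rule binomial_ring)
  also have "\<dots> = (\<Sum>k\<in>{0, ?q}. of_nat (?q choose k) * a ^ k * b ^ (?q - k))"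
  proof (rule sum.mono_neutral_right)
    show "\<forall>k\<in>{..?q} - {0, ?q}. of_nat (?q choose k) * a ^ k * b ^ (?q - k) = 0"
      using of_nat_CARD_choose_eq_0[where 'a='a] by (auto simp: of_nat_poly)
  qed auto
  also have "\<dots> = a ^ ?q + b ^ ?q"
    using finite_UNIV_card_ge_0[where 'a='a] by (simp add: add.commute)
  finally show ?thesis .
qed

lemma poly_power_CARD_power_add:
  fixes a b :: "'a::{field,finite} poly"
  shows "(a + b) ^ (CARD('a) ^ j) = a ^ (CARD('a) ^ j) + b ^ (CARD('a) ^ j)"
  by (induction j arbitrary: a b) (simp_all add: poly_power_CARD_add power_mult)

lemma poly_power_CARD_power_eq_pcompose:
  fixes p :: "'a::{field,finite} poly"
  shows "p ^ (CARD('a) ^ j) = pcompose p (monom 1 (CARD('a) ^ j))"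
proof (induction p)
  case (pCons c p)
  let ?Q = "CARD('a) ^ j"
  have "pCons c p = [:c:] + monom 1 1 * p"
    by (simp add: monom_Suc monom_0 one_pCons)
  then have "pCons c p ^ ?Q = [:c:] ^ ?Q + (monom 1 1 * p) ^ ?Q"
    by (simp add: poly_power_CARD_power_add)
  also have "[:c:] ^ ?Q = [:c:]" by (simp add: poly_const_pow power_CARD_power_eq_same)
  also have "(monom 1 1 * p) ^ ?Q = monom 1 ?Q * pcompose p (monom 1 ?Q)"
    by (simp add: power_mult_distrib pCons monom_power)
  finally show ?case by (simp add: pcompose_pCons)
qed simp

lemma matpow_poly_mat_CARD_power:
  fixes A :: "'a::{field,finite}^'n^'n"
  shows "matpow (poly_mat p A) (CARD('a) ^ j) = poly_mat p (matpow A (CARD('a) ^ j))"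
  by (simp add: matpow_poly_mat poly_power_CARD_power_eq_pcompose poly_mat_pcompose poly_mat_monom)

lemma CARD_ge_2: "2 \<le> CARD('a::{field,finite})"
proof -
  have "card {0::'a, 1} \<le> CARD('a)" by (rule card_mono) auto
  then show ?thesis by simp
qed

lemma power_minus_one_dvd:
  fixes q :: nat
  assumes "1 \<le> q"
  shows "(q ^ a - 1) dvd (q ^ (a * c) - 1)"
proof (induction c)
  case (Suc c)
  have "q ^ (a * Suc c) - 1 = q ^ a * (q ^ (a * c) - 1) + (q ^ a - 1)"
    using assms by (simp add: power_add algebra_simps)
  then show ?case using Suc by (simp add: dvd_add)
qed simp

lemma power_minus_one_dvd_imp_dvd:
  fixes q :: nat
  assumes q: "2 \<le> q" and "(q ^ a - 1) dvd (q ^ b - 1)"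
  shows "a dvd b"
  using assms(2)
proof (induction b rule: less_induct)
  case (less b)
  show ?case
  proof (cases "a \<le> b \<and> 0 < a")
    case True
    have "q ^ b - 1 = q ^ (b - a) * (q ^ a - 1) + (q ^ (b - a) - 1)"
      using True q by (simp add: algebra_simps flip: power_add)
    then have "(q ^ a - 1) dvd (q ^ (b - a) - 1)"
      using less.prems by (metis dvd_add_right_iff dvd_triv_right)
    then have "a dvd (b - a)" using less.IH[of "b - a"] True by simp
    then show ?thesis using True by (metis dvd_add_triv_right_iff le_add_diff_inverse2)
  next
    case False
    then have "q ^ b - 1 < q ^ a - 1 \<or> a = 0"
      using q by (auto simp: power_strict_increasing diff_less_mono)
    then have "q ^ b - 1 = 0"
      using less.prems by (auto dest: dvd_imp_le)
    then have "\<not> 0 < b" using q one_less_power[of q b] by linarith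
    then show ?thesis by simp
  qed
qed


section \<open>Subspaces and invariant subspaces\<close>

lemma card_subspace:
  fixes X :: "('a::{field,finite}^'n) set"
  assumes "vec.subspace X"
  shows "card X = CARD('a) ^ vec.dim X"
proof -
  obtain B where B: "B \<subseteq> X" "vec.independent B" "X \<subseteq> vec.span B" "card B = vec.dim X"
    using vec.basis_exists by blast
  have fB: "finite B" using B(2) vec.finiteI_independent by blast
  have spanB: "vec.span B = X"
    using B(1,3) assms vec.span_mono vec.span_eq_iff by blast
  define f where "f = (\<lambda>c. \<Sum>v\<in>B. c v *s v)"
  have "bij_betw f (PiE B (\<lambda>_. UNIV :: 'a set)) X"
  proof (rule bij_betwI')
    fix c c' assume c: "c \<in> PiE B (\<lambda>_. UNIV :: 'a set)" and c': "c' \<in> PiE B (\<lambda>_. UNIV :: 'a set)"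
    show "(f c = f c') = (c = c')"
    proof
      assume "f c = f c'"
      then have "(\<Sum>v\<in>B. (c v - c' v) *s v) = 0"
        by (simp add: f_def sum_subtractf vec.scale_left_diff_distrib)
      moreover have indep: "(\<Sum>v\<in>B. u v *s v) = 0 \<Longrightarrow> \<forall>v\<in>B. u v = 0" for u
        using B(2) unfolding vec.independent_explicit by blast
      ultimately have "\<forall>v\<in>B. c v - c' v = 0" using indep[of "\<lambda>v. c v - c' v"] by simp
      then show "c = c'" using c c' by (intro PiE_ext) auto
    qed simp
  next
    show "f c \<in> X" for c :: "'a^'n \<Rightarrow> 'a" unfolding f_def using spanB vec.span_finite[OF fB] by blast
  next
    fix x assume "x \<in> X"
    then obtain u where u: "x = (\<Sum>v\<in>B. u v *s v)"
      using spanB vec.span_finite[OF fB] by blast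
    show "\<exists>c\<in>PiE B (\<lambda>_. UNIV :: 'a set). x = f c"
      by (rule bexI[of _ "restrict u B"]) (auto simp: f_def u intro: sum.cong)
  qed
  then have "card X = card (PiE B (\<lambda>_. UNIV :: 'a set))"
    by (simp add: bij_betw_same_card)
  then show ?thesis using B(4) fB by (simp add: card_PiE)
qed

lemma subspace_dim_less:
  assumes "vec.subspace Y" "vec.subspace X" "Y \<subseteq> X" "x \<in> X" "x \<notin> Y"
  shows "vec.dim Y < vec.dim X"
proof -
  have "vec.span Y = Y" "vec.span X = X" using assms(1,2) by (simp_all add: vec.span_eq_iff)
  with assms(3-5) have "vec.span Y \<subset> vec.span X" by blast
  then show ?thesis by (rule vec.dim_psubset)
qed

definition invariant_subspace :: "('a::field^'n^'n) set \<Rightarrow> ('a^'n) set \<Rightarrow> bool" where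
  "invariant_subspace R X \<longleftrightarrow> vec.subspace X \<and> (\<forall>r\<in>R. \<forall>x\<in>X. r *v x \<in> X)"

lemma invariant_subspace_image:
  assumes "invariant_subspace R X" and "\<And>r. r \<in> R \<Longrightarrow> r ** A = A ** r"
  shows "invariant_subspace R ((\<lambda>x. A *v x) ` X)"
proof -
  have "vec.subspace ((\<lambda>x. A *v x) ` X)"
    using assms(1) vec.subspace_image
    by (auto simp: invariant_subspace_def)
  moreover have "r *v (A *v x) \<in> (\<lambda>x. A *v x) ` X" if "r \<in> R" "x \<in> X" for r x
  proof (rule image_eqI)
    show "r *v (A *v x) = A *v (r *v x)"
      using assms(2)[OF that(1)] by (simp add: matrix_vector_mul_assoc)
    show "r *v x \<in> X" using assms(1) that by (simp add: invariant_subspace_def)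
  qed
  ultimately show ?thesis by (auto simp: invariant_subspace_def)
qed

lemma restrict_eq_iff: "restrict f X = restrict g X \<longleftrightarrow> (\<forall>x\<in>X. f x = g x)"
  by (metis restrict_apply' restrict_ext)

definition restrictions :: "('a::semiring_1^'n^'n) set \<Rightarrow> ('a^'n) set \<Rightarrow> ('a^'n \<Rightarrow> 'a^'n) set" where
  "restrictions R X = (\<lambda>r. restrict (\<lambda>x. r *v x) X) ` R"

lemma card_restrictions_le_decomposition:
  fixes R :: "('a::{semiring_1,finite}^'n^'n) set"
  assumes "X1 \<subseteq> X" "X2 \<subseteq> X"
    and "\<forall>x\<in>X. \<exists>a\<in>X1. \<exists>b\<in>X2. x = a + b"
  shows "card (restrictions R X) \<le> card (restrictions R X1) * card (restrictions R X2)"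
proof -
  define F where "F f = (restrict f X1, restrict f X2)" for f :: "'a^'n \<Rightarrow> 'a^'n"
  have "inj_on F (restrictions R X)"
  proof (rule inj_onI)
    fix f g assume "f \<in> restrictions R X" "g \<in> restrictions R X" and eq: "F f = F g"
    then obtain r s where rs: "r \<in> R" "s \<in> R" "f = restrict (\<lambda>x. r *v x) X" "g = restrict (\<lambda>x. s *v x) X"
      by (auto simp: restrictions_def)
    have "r *v x = s *v x" if "x \<in> X1 \<or> x \<in> X2" for x
      using eq that assms(1,2) by (auto simp: F_def rs restrict_def fun_eq_iff split: if_splits)
    then have "r *v x = s *v x" if "x \<in> X" for x
      using assms(3) that by (auto simp: matrix_vector_right_distrib)
    then show "f = g" by (auto simp: rs)
  qed
  moreover have "F (restrict (\<lambda>x. r *v x) X) = (restrict (\<lambda>x. r *v x) X1, restrict (\<lambda>x. r *v x) X2)"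
    for r
    using assms(1,2) by (auto simp: F_def restrict_def fun_eq_iff)
  then have "F ` restrictions R X \<subseteq> restrictions R X1 \<times> restrictions R X2"
    by (auto simp: restrictions_def)
  ultimately have "card (restrictions R X) \<le> card (restrictions R X1 \<times> restrictions R X2)"
    by (intro card_inj_on_le) simp_all
  then show ?thesis by (simp add: card_cartesian_product)
qed


section \<open>Commutative matrix algebras satisfying a Frobenius identity\<close>

lemma idempotent_decomposition:
  fixes e :: "'a::field^'n^'n"
  assumes X: "vec.subspace X" and maps: "\<forall>x\<in>X. e *v x \<in> X"
    and idem: "\<forall>x\<in>X. e *v (e *v x) = e *v x"
  defines "X1 \<equiv> (\<lambda>x. e *v x) ` X" and "X2 \<equiv> (\<lambda>x. (mat 1 - e) *v x) ` X"
  shows "X1 \<subseteq> X" "X2 \<subseteq> X" "\<forall>x\<in>X. \<exists>a\<in>X1. \<exists>b\<in>X2. x = a + b"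
    and "\<forall>a\<in>X1. e *v a = a" "\<forall>b\<in>X2. e *v b = 0" "card X = card X1 * card X2"
proof -
  have split: "(mat 1 - e) *v x = x - e *v x" for x
    by (simp add: matrix_vector_mult_diff_rdistrib)
  show X1: "X1 \<subseteq> X" using maps by (auto simp: X1_def)
  show X2: "X2 \<subseteq> X" using maps vec.subspace_diff[OF X] by (auto simp: X2_def split)
  show sum: "\<forall>x\<in>X. \<exists>a\<in>X1. \<exists>b\<in>X2. x = a + b"
    by (force simp: X1_def X2_def split)
  show e1: "\<forall>a\<in>X1. e *v a = a" using idem by (auto simp: X1_def)
  show e2: "\<forall>b\<in>X2. e *v b = 0"
    using idem by (auto simp: X2_def split matrix_vector_mult_diff_distrib)
  have "bij_betw (\<lambda>(a, b). a + b) (X1 \<times> X2) X"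
  proof (rule bij_betwI')
    have "a = e *v (a + b)" if "a \<in> X1" "b \<in> X2" for a b
      using that e1 e2 by (simp add: matrix_vector_right_distrib)
    then have "a = a' \<and> b = b'" if "a \<in> X1" "b \<in> X2" "a' \<in> X1" "b' \<in> X2" "a + b = a' + b'"
      for a b a' b'
      using that by (metis add_left_cancel)
    then show "((\<lambda>(a, b). a + b) p = (\<lambda>(a, b). a + b) p') = (p = p')"
      if "p \<in> X1 \<times> X2" "p' \<in> X1 \<times> X2" for p p'
      using that by (cases p, cases p') auto
  next
    show "(\<lambda>(a, b). a + b) p \<in> X" if "p \<in> X1 \<times> X2" for p
      using that X1 X2 vec.subspace_add[OF X] by auto
  next
    show "\<exists>p\<in>X1 \<times> X2. x = (\<lambda>(a, b). a + b) p" if "x \<in> X" for x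
      using sum that by fastforce
  qed
  then have "card (X1 \<times> X2) = card X" by (rule bij_betw_same_card)
  then show "card X = card X1 * card X2" by (simp add: card_cartesian_product)
qed

locale comm_matrix_algebra =
  fixes R :: "('a::{field,finite}^'n^'n) set"
  assumes add_closed: "r \<in> R \<Longrightarrow> s \<in> R \<Longrightarrow> r + s \<in> R"
    and mult_closed: "r \<in> R \<Longrightarrow> s \<in> R \<Longrightarrow> r ** s \<in> R"
    and mat_closed: "mat c \<in> R"
    and commute: "r \<in> R \<Longrightarrow> s \<in> R \<Longrightarrow> r ** s = s ** r"
begin

lemma diff_closed: "r \<in> R \<Longrightarrow> s \<in> R \<Longrightarrow> r - s \<in> R"
  using add_closed[OF _ mult_closed[OF mat_closed, of s "-1"]]
  by (simp add: mat_uminus matrix_minus_left)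

lemma matpow_closed: "r \<in> R \<Longrightarrow> matpow r j \<in> R"
  by (induction j) (simp_all add: mat_closed mult_closed)

lemma card_restrictions_le_if_injective:
  assumes X: "invariant_subspace R X"
    and inj: "\<forall>r\<in>R. (\<exists>x\<in>X. r *v x \<noteq> 0) \<longrightarrow> (\<forall>x\<in>X. r *v x = 0 \<longrightarrow> x = 0)"
  shows "card (restrictions R X) \<le> card X"
proof (cases "X \<subseteq> {0}")
  case True
  then have "X = {0}" using X vec.subspace_0 by (auto simp: invariant_subspace_def)
  then have "restrictions R X \<subseteq> {restrict (\<lambda>x. 0) X}"
    by (auto simp: restrictions_def restrict_def fun_eq_iff)
  from card_mono[OF _ this] show ?thesis using \<open>X = {0}\<close> by simp
next
  case False
  then obtain x0 where x0: "x0 \<in> X" "x0 \<noteq> 0" by blast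
  \<comment> \<open>A restriction is determined by its value at \<open>x0\<close>: two restrictions agreeing there
    differ by an element of \<open>R\<close> that is not injective on \<open>X\<close>, hence vanishes on \<open>X\<close>.\<close>
  have "inj_on (\<lambda>f. f x0) (restrictions R X)"
  proof (rule inj_onI)
    fix f g assume "f \<in> restrictions R X" "g \<in> restrictions R X" and eq: "f x0 = g x0"
    then obtain r s where rs: "r \<in> R" "s \<in> R" "f = restrict (\<lambda>x. r *v x) X" "g = restrict (\<lambda>x. s *v x) X"
      by (auto simp: restrictions_def)
    have "(r - s) *v x0 = 0" using eq x0 rs by (simp add: matrix_vector_mult_diff_rdistrib)
    then have "\<forall>x\<in>X. (r - s) *v x = 0" using inj diff_closed[OF rs(1,2)] x0 by blast
    then show "f = g" by (auto simp: rs matrix_vector_mult_diff_rdistrib)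
  qed
  moreover have "(\<lambda>f. f x0) ` restrictions R X \<subseteq> X"
    using X x0 by (auto simp: restrictions_def invariant_subspace_def)
  ultimately show ?thesis by (simp add: card_inj_on_le)
qed

lemma frobenius_idempotent:
  assumes X: "vec.subspace X" and Q: "2 \<le> Q"
    and frob: "\<forall>r\<in>R. \<forall>x\<in>X. matpow r Q *v x = r *v x" and y: "y \<in> R"
  defines "e \<equiv> matpow y (Q - 1)"
  shows "e \<in> R" and "\<forall>x\<in>X. e *v (e *v x) = e *v x" and "\<forall>x\<in>X. e *v x = 0 \<longleftrightarrow> y *v x = 0"
proof -
  show "e \<in> R" by (simp add: e_def matpow_closed y)
  have "Q - 1 = Suc (Q - 2)" "Q = Suc (Q - 1)" using Q by simp_all
  then have e_Suc: "e = matpow y (Q - 2) ** y" and y_e: "y ** e = matpow y Q"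
    by (metis e_def matpow_Suc_right, metis e_def matpow.simps(2))
  show "\<forall>x\<in>X. e *v (e *v x) = e *v x"
  proof
    fix x assume "x \<in> X"
    have "(Q - 1) + (Q - 1) = (Q - 2) + Q" using Q by simp
    then have "e *v (e *v x) = matpow y (Q - 2) *v (matpow y Q *v x)"
      by (simp add: e_def matrix_vector_mul_assoc flip: matpow_add)
    then show "e *v (e *v x) = e *v x"
      using frob y \<open>x \<in> X\<close> by (simp add: e_Suc matrix_vector_mul_assoc)
  qed
  show "\<forall>x\<in>X. e *v x = 0 \<longleftrightarrow> y *v x = 0"
  proof (intro ballI iffI)
    fix x assume "x \<in> X" "e *v x = 0"
    then have "matpow y Q *v x = 0" by (simp flip: y_e matrix_vector_mul_assoc)
    then show "y *v x = 0" using frob y \<open>x \<in> X\<close> by simp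
  next
    fix x assume "y *v x = 0"
    then show "e *v x = 0" by (simp add: e_Suc flip: matrix_vector_mul_assoc)
  qed
qed

lemma card_restrictions_le:
  assumes "invariant_subspace R X" and "2 \<le> Q"
    and "\<forall>r\<in>R. \<forall>x\<in>X. matpow r Q *v x = r *v x"
  shows "card (restrictions R X) \<le> card X"
  using assms
proof (induction "vec.dim X" arbitrary: X rule: less_induct)
  case less
  note X = less.prems(1) and frob = less.prems(3)
  have Xs: "vec.subspace X" and inv: "\<forall>r\<in>R. \<forall>x\<in>X. r *v x \<in> X"
    using X by (auto simp: invariant_subspace_def)
  show ?case
  proof (cases "\<forall>r\<in>R. (\<exists>x\<in>X. r *v x \<noteq> 0) \<longrightarrow> (\<forall>x\<in>X. r *v x = 0 \<longrightarrow> x = 0)")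
    case True
    then show ?thesis using card_restrictions_le_if_injective[OF X] by blast
  next
    case False
    then obtain y x1 x2 where y: "y \<in> R" and x1: "x1 \<in> X" "x1 \<noteq> 0" "y *v x1 = 0"
      and x2: "x2 \<in> X" "y *v x2 \<noteq> 0" by blast
    \<comment> \<open>Split \<open>X\<close> along the idempotent \<open>e = y ^ (Q - 1)\<close>; both parts are proper, since
      \<open>x1\<close> lies in the kernel of \<open>e\<close> and \<open>e x2\<close> in its image.\<close>
    define e where "e = matpow y (Q - 1)"
    note e = frobenius_idempotent[OF Xs \<open>2 \<le> Q\<close> frob y, folded e_def]
    define X1 where "X1 = (\<lambda>x. e *v x) ` X"
    define X2 where "X2 = (\<lambda>x. (mat 1 - e) *v x) ` X"
    have "\<forall>x\<in>X. e *v x \<in> X" using inv e(1) by blast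
    note dec = idempotent_decomposition[OF Xs this e(2), folded X1_def X2_def]
    have "r ** e = e ** r" if "r \<in> R" for r using commute[OF that e(1)] .
    then have X1: "invariant_subspace R X1" and X2: "invariant_subspace R X2"
      unfolding X1_def X2_def using invariant_subspace_image[OF X]
      by (auto simp: matrix_diff_ldistrib matrix_diff_rdistrib)
    have "x1 \<notin> X1" using dec(4) e(3) x1 by auto
    then have dim1: "vec.dim X1 < vec.dim X"
      using X1 Xs dec(1) x1(1) by (intro subspace_dim_less) (auto simp: invariant_subspace_def)
    have "e *v x2 \<notin> X2" using dec(5) e(2,3) x2 by auto
    then have dim2: "vec.dim X2 < vec.dim X"
      using X2 Xs dec(2) inv e(1) x2(1)
      by (intro subspace_dim_less) (auto simp: invariant_subspace_def)
    have frob_sub: "\<forall>r\<in>R. \<forall>x\<in>Y. matpow r Q *v x = r *v x" if "Y \<subseteq> X" for Y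
      using frob that by blast
    have "card (restrictions R X) \<le> card (restrictions R X1) * card (restrictions R X2)"
      by (rule card_restrictions_le_decomposition[OF dec(1-3)])
    also have "\<dots> \<le> card X1 * card X2"
      using less.hyps[OF dim1 X1 \<open>2 \<le> Q\<close> frob_sub[OF dec(1)]]
        less.hyps[OF dim2 X2 \<open>2 \<le> Q\<close> frob_sub[OF dec(2)]]
      by (rule mult_le_mono)
    finally show ?thesis using dec(6) by simp
  qed
qed

end

lemma comm_matrix_algebra_poly_mat:
  fixes A :: "'a::{field,finite}^'n^'n"
  shows "comm_matrix_algebra (range (\<lambda>p. poly_mat p A))"
proof
  fix r s assume "r \<in> range (\<lambda>p. poly_mat p A)" "s \<in> range (\<lambda>p. poly_mat p A)"
  then show "r + s \<in> range (\<lambda>p. poly_mat p A)" "r ** s \<in> range (\<lambda>p. poly_mat p A)"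
    and "r ** s = s ** r"
    by (auto simp: poly_mat_commute simp flip: poly_mat_add poly_mat_mult)
qed (metis poly_mat_const rangeI)


section \<open>Singer cycles act regularly\<close>

locale singer_block =
  fixes t :: "'a::{field,finite}^'n^'n" and X :: "('a^'n) set"
  assumes subspace: "vec.subspace X" and singer: "singer_on t X"
begin

definition N where "N = CARD('a) ^ vec.dim X - 1"

lemma maps_to: "x \<in> X \<Longrightarrow> t *v x \<in> X"
  using singer by (simp add: singer_on_def)

lemma matpow_maps_to: "x \<in> X \<Longrightarrow> matpow t j *v x \<in> X"
  by (induction j) (auto simp: maps_to simp flip: matrix_vector_mul_assoc)

lemma N_pos: "0 < N"
  using singer by (simp add: singer_on_def N_def Let_def)

lemma matpow_N: "x \<in> X \<Longrightarrow> matpow t N *v x = x"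
  using singer by (simp add: singer_on_def N_def Let_def funpow_matrix_vector_mult)

lemma N_minimal: "0 < m \<Longrightarrow> m < N \<Longrightarrow> \<exists>x\<in>X. matpow t m *v x \<noteq> x"
  using singer by (simp add: singer_on_def N_def Let_def funpow_matrix_vector_mult)

lemma matpow_N_mult: "x \<in> X \<Longrightarrow> matpow t (N * c) *v x = x"
  by (induction c) (simp_all add: matpow_add matpow_N flip: matrix_vector_mul_assoc)

lemma matpow_mod_N: "x \<in> X \<Longrightarrow> matpow t m *v x = matpow t (m mod N) *v x"
  using matpow_add[of t "m mod N" "N * (m div N)"] matpow_N_mult[of x "m div N"]
  by (simp flip: matrix_vector_mul_assoc)

lemma matpow_eq_id_iff_dvd: "(\<forall>x\<in>X. matpow t m *v x = x) \<longleftrightarrow> N dvd m"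
proof
  assume "\<forall>x\<in>X. matpow t m *v x = x"
  then have "\<forall>x\<in>X. matpow t (m mod N) *v x = x" using matpow_mod_N by metis
  then have "\<not> 0 < m mod N" using N_minimal[of "m mod N"] N_pos by auto
  then show "N dvd m" by (simp add: dvd_eq_mod_eq_0)
next
  assume "N dvd m"
  then obtain c where "m = N * c" by (rule dvdE)
  then show "\<forall>x\<in>X. matpow t m *v x = x" by (simp add: matpow_N_mult)
qed

lemma card_eq: "card X = Suc N"
  using card_subspace[OF subspace] CARD_ge_2[where 'a='a] by (simp add: N_def)

lemma exists_nonzero: "\<exists>x\<in>X. x \<noteq> 0"
proof (rule ccontr)
  assume "\<not> (\<exists>x\<in>X. x \<noteq> 0)"
  then have "X = {0}" using vec.subspace_0[OF subspace] by auto
  then show False using card_eq N_pos by simp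
qed

lemma matpow_nonzero:
  assumes "x \<in> X" "x \<noteq> 0"
  shows "matpow t j *v x \<noteq> 0"
proof
  assume "matpow t j *v x = 0"
  moreover have "j \<le> N * Suc j" using N_pos by (cases N) auto
  then have "matpow t (N * Suc j) = matpow t (N * Suc j - j) ** matpow t j"
    by (simp flip: matpow_add)
  ultimately have "matpow t (N * Suc j) *v x = 0" by (simp flip: matrix_vector_mul_assoc)
  then show False using matpow_N_mult[OF assms(1), of "Suc j"] assms(2) by simp
qed

lemma matpow_eq_on_imp_dvd:
  assumes "i \<le> j" and eq: "\<forall>x\<in>X. matpow t i *v x = matpow t j *v x"
  shows "N dvd (j - i)"
proof -
  have "matpow t (j - i) *v y = y" if y: "y \<in> X" for y
  proof -
    \<comment> \<open>Write \<open>y = t ^ i z\<close> with \<open>z = t ^ ((N - 1) * i) y\<close>.\<close>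
    define z where "z = matpow t ((N - 1) * i) *v y"
    have z: "z \<in> X" using matpow_maps_to[OF y] by (simp add: z_def)
    have "i + (N - 1) * i = N * i" using N_pos by (cases N) simp_all
    then have yz: "matpow t i *v z = y"
      using matpow_N_mult[OF y, of i] by (simp add: z_def matrix_vector_mul_assoc flip: matpow_add)
    have "matpow t (j - i) *v y = matpow t j *v z"
      using \<open>i \<le> j\<close> by (simp add: yz[symmetric] matrix_vector_mul_assoc flip: matpow_add)
    also have "\<dots> = y" using eq z yz by simp
    finally show ?thesis .
  qed
  then show ?thesis using matpow_eq_id_iff_dvd by blast
qed

lemma restrictions_matpow_inj: "inj_on (\<lambda>j. restrict (\<lambda>x. matpow t j *v x) X) {..<N}"
proof (rule linorder_inj_onI')
  fix i j assume ij: "i \<in> {..<N}" "j \<in> {..<N}" "i < j"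
  show "restrict (\<lambda>x. matpow t i *v x) X \<noteq> restrict (\<lambda>x. matpow t j *v x) X"
  proof
    assume "restrict (\<lambda>x. matpow t i *v x) X = restrict (\<lambda>x. matpow t j *v x) X"
    then have "N dvd (j - i)" using matpow_eq_on_imp_dvd[of i j] ij(3) by (simp add: restrict_eq_iff)
    then have "N \<le> j - i" using ij(3) by (simp add: dvd_imp_le)
    then show False using ij(2) by simp
  qed
qed

text \<open>The algebra generated by \<open>t\<close>, restricted to \<open>X\<close>, has \<open>q ^ dim X\<close> elements at most by the
  Frobenius bound, and it already contains \<open>0\<close> and the \<open>N = q ^ dim X - 1\<close> distinct powers of \<open>t\<close>.\<close>

lemma restrictions_poly_mat:
  "restrictions (range (\<lambda>p. poly_mat p t)) X
     = insert (restrict (\<lambda>x. 0) X) ((\<lambda>j. restrict (\<lambda>x. matpow t j *v x) X) ` {..<N})"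
    (is "restrictions ?R X = ?P")
proof -
  interpret comm_matrix_algebra ?R by (rule comm_matrix_algebra_poly_mat)
  let ?Q = "CARD('a) ^ vec.dim X"
  have inv: "invariant_subspace ?R X"
    using poly_mat_eq_on_invariant_subspace[OF subspace, of t t] maps_to subspace
    by (auto simp: invariant_subspace_def)
  have Q: "?Q = Suc N" using N_pos by (simp add: N_def)
  have tQ: "\<forall>x\<in>X. matpow t ?Q *v x = t *v x"
    using matpow_N maps_to by (simp add: Q matpow_Suc_right flip: matrix_vector_mul_assoc)
  have frob: "\<forall>r\<in>?R. \<forall>x\<in>X. matpow r ?Q *v x = r *v x"
    using poly_mat_eq_on_invariant_subspace[OF subspace _ tQ] maps_to
    by (auto simp: matpow_poly_mat_CARD_power)
  have "2 \<le> ?Q" using N_pos by (simp add: Q)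
  then have le: "card (restrictions ?R X) \<le> card X"
    using card_restrictions_le[OF inv _ frob] by blast
  have "restrict (\<lambda>x. 0) X \<notin> (\<lambda>j. restrict (\<lambda>x. matpow t j *v x) X) ` {..<N}"
  proof
    assume "restrict (\<lambda>x. 0) X \<in> (\<lambda>j. restrict (\<lambda>x. matpow t j *v x) X) ` {..<N}"
    then obtain j where j: "\<forall>x\<in>X. 0 = matpow t j *v x"
      unfolding image_iff restrict_eq_iff by blast
    obtain x0 where "x0 \<in> X" "x0 \<noteq> 0" using exists_nonzero by blast
    then show False using j matpow_nonzero by force
  qed
  then have card: "card ?P = Suc N"
    by (simp add: card_image[OF restrictions_matpow_inj])
  have "restrict (\<lambda>x. 0) X \<in> restrictions ?R X"
    unfolding restrictions_def by (rule image_eqI[where x = 0]) (auto intro!: range_eqI[where x = 0])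
  moreover have "restrict (\<lambda>x. matpow t j *v x) X \<in> restrictions ?R X" for j
    unfolding restrictions_def
    by (rule image_eqI[where x = "matpow t j"])
      (auto intro!: range_eqI[where x = "monom 1 j"] simp: poly_mat_monom)
  ultimately have "?P \<subseteq> restrictions ?R X" by blast
  then show ?thesis
    using le card card_eq by (intro card_seteq[symmetric]) simp_all
qed

lemma matpow_fixes_nonzero_imp_dvd:
  assumes x: "x \<in> X" "x \<noteq> 0" and fixed: "matpow t m *v x = x"
  shows "N dvd m"
proof -
  let ?r = "poly_mat (monom 1 m - 1) t"
  have r: "?r *v y = matpow t m *v y - y" for y
    by (simp add: poly_mat_diff poly_mat_monom matrix_vector_mult_diff_rdistrib)
  have "restrict (\<lambda>y. ?r *v y) X \<in> restrictions (range (\<lambda>p. poly_mat p t)) X"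
    by (auto simp: restrictions_def)
  then consider "\<forall>y\<in>X. ?r *v y = 0" | j where "\<forall>y\<in>X. ?r *v y = matpow t j *v y"
    unfolding restrictions_poly_mat image_iff restrict_eq_iff[symmetric] by blast
  then show ?thesis
  proof cases
    case 1
    then show ?thesis using matpow_eq_id_iff_dvd r by simp
  next
    case 2
    then have "matpow t j *v x = poly_mat (monom 1 m - 1) t *v x" using x(1) by simp
    also have "\<dots> = 0" using fixed r by simp
    finally have "matpow t j *v x = 0" .
    then show ?thesis using matpow_nonzero x by blast
  qed
qed

lemma transitive:
  assumes x: "x \<in> X" "x \<noteq> 0" and y: "y \<in> X" "y \<noteq> 0"
  shows "\<exists>j. matpow t j *v x = y"
proof -
  have "inj_on (\<lambda>j. matpow t j *v x) {..<N}"
  proof (rule linorder_inj_onI')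
    fix i j assume ij: "i \<in> {..<N}" "j \<in> {..<N}" "i < j"
    show "matpow t i *v x \<noteq> matpow t j *v x"
    proof
      assume eq: "matpow t i *v x = matpow t j *v x"
      have "matpow t (j - i) *v (matpow t i *v x) = matpow t j *v x"
        using ij(3) by (simp add: matrix_vector_mul_assoc flip: matpow_add)
      then have "N dvd (j - i)"
        using eq matpow_fixes_nonzero_imp_dvd[OF matpow_maps_to[OF x(1)] matpow_nonzero[OF x]]
        by simp
      then have "N \<le> j - i" using ij(3) by (simp add: dvd_imp_le)
      then show False using ij(2) by simp
    qed
  qed
  moreover have "(\<lambda>j. matpow t j *v x) ` {..<N} \<subseteq> X - {0}"
    using matpow_maps_to matpow_nonzero x by auto
  moreover have "card (X - {0}) = N"
    using card_eq vec.subspace_0[OF subspace] by simp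
  ultimately have "(\<lambda>j. matpow t j *v x) ` {..<N} = X - {0}"
    by (intro card_seteq) (simp_all add: card_image)
  then have "y \<in> (\<lambda>j. matpow t j *v x) ` {..<N}" using y by simp
  then show ?thesis by auto
qed

lemma scalar_eq_matpow:
  assumes "c \<noteq> 0"
  shows "\<exists>j. \<forall>x\<in>X. matpow t j *v x = c *s x"
proof -
  obtain x0 where x0: "x0 \<in> X" "x0 \<noteq> 0" using exists_nonzero by blast
  moreover have "c *s x0 \<in> X" "c *s x0 \<noteq> 0" using x0 assms vec.subspace_scale[OF subspace] by auto
  ultimately obtain j where j: "matpow t j *v x0 = c *s x0" using transitive by blast
  \<comment> \<open>Both sides commute with the powers of \<open>t\<close>, which reach every nonzero vector from \<open>x0\<close>.\<close>
  have "matpow t j *v x = c *s x" if x: "x \<in> X" for x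
  proof (cases "x = 0")
    case False
    then obtain i where i: "matpow t i *v x0 = x" using transitive x0 x by blast
    have "matpow t j *v x = matpow t i *v (matpow t j *v x0)"
      by (simp add: i[symmetric] matrix_vector_mul_assoc matpow_commute)
    then show ?thesis by (simp add: j i vector_scalar_commute)
  qed simp
  then show ?thesis by blast
qed

lemma subset_if_invariant_meets:
  assumes Y: "\<forall>j. \<forall>y\<in>Y. matpow t j *v y \<in> Y" "0 \<in> Y"
    and x: "x \<in> X" "x \<noteq> 0" "x \<in> Y"
  shows "X \<subseteq> Y"
proof
  fix z assume "z \<in> X"
  then show "z \<in> Y" using transitive[OF x(1,2)] Y x(3) by (cases "z = 0") auto
qed

end


section \<open>Irreducible matrix algebras\<close>

lemma subring_zero: "is_subring S \<Longrightarrow> 0 \<in> S"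
  and subring_diff: "is_subring S \<Longrightarrow> A \<in> S \<Longrightarrow> B \<in> S \<Longrightarrow> A - B \<in> S"
  and subring_mult: "is_subring S \<Longrightarrow> A \<in> S \<Longrightarrow> B \<in> S \<Longrightarrow> A ** B \<in> S"
  by (simp_all add: is_subring_def)

lemma subring_uminus: "is_subring S \<Longrightarrow> A \<in> S \<Longrightarrow> - A \<in> S"
  using subring_diff[OF _ subring_zero] by fastforce

lemma subring_add: "is_subring S \<Longrightarrow> A \<in> S \<Longrightarrow> B \<in> S \<Longrightarrow> A + B \<in> S"
  using subring_diff[OF _ _ subring_uminus, of S A B] by simp

lemma subring_sum: "is_subring S \<Longrightarrow> (\<And>i. i \<in> I \<Longrightarrow> f i \<in> S) \<Longrightarrow> sum f I \<in> S"
  by (induction I rule: infinite_finite_induct) (auto intro: subring_add subring_zero)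

definition irreducible_action :: "('a::field^'n^'n) set \<Rightarrow> bool" where
  "irreducible_action T \<longleftrightarrow> (\<forall>Y. invariant_subspace T Y \<longrightarrow> Y = {0} \<or> Y = UNIV)"

definition left_ideal :: "('a::field^'n^'n) set \<Rightarrow> ('a^'n^'n) set \<Rightarrow> bool" where
  "left_ideal T J \<longleftrightarrow> 0 \<in> J \<and> (\<forall>a\<in>J. \<forall>b\<in>J. a - b \<in> J) \<and> (\<forall>A\<in>T. \<forall>a\<in>J. A ** a \<in> J)"

lemma is_subring_centralizer: "is_subring (centralizer K)"
proof -
  have "(A ** B) ** u = u ** (A ** B)" if "A \<in> centralizer K" "B \<in> centralizer K" "u \<in> K" for A B u
  proof -
    have "(A ** B) ** u = A ** (u ** B)" using that by (simp add: centralizer_def flip: matrix_mul_assoc)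
    also have "\<dots> = u ** (A ** B)" using that by (simp add: centralizer_def matrix_mul_assoc)
    finally show ?thesis .
  qed
  then show ?thesis
    by (auto simp: is_subring_def centralizer_def matrix_diff_rdistrib matrix_diff_ldistrib)
qed

lemma mat_in_centralizer: "mat c \<in> centralizer K"
  by (simp add: centralizer_def mat_commute)

lemma centralizer_nonzero_imp_injective:
  assumes T: "irreducible_action T" and d: "d \<in> centralizer T" "d \<noteq> 0" and x: "d *v x = 0"
  shows "x = 0"
proof -
  \<comment> \<open>Schur's lemma: the kernel of \<open>d\<close> is \<open>T\<close>-invariant.\<close>
  have "d *v (A *v y) = A *v (d *v y)" if "A \<in> T" for A y
    using d(1) that by (simp add: centralizer_def matrix_vector_mul_assoc)
  then have "invariant_subspace T {y. d *v y = 0}"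
    by (auto simp: invariant_subspace_def vec.subspace_def matrix_vector_right_distrib
        vector_scalar_commute)
  moreover have "{y. d *v y = 0} \<noteq> UNIV" using d(2) by (auto simp: matrix_eq)
  ultimately show ?thesis using T x by (auto simp: irreducible_action_def)
qed

locale matrix_algebra =
  fixes T :: "('a::field^'n^'n) set"
  assumes subring: "is_subring T" and mat_mem: "mat c \<in> T"
begin

lemmas zero_mem = subring_zero[OF subring]
  and diff_mem = subring_diff[OF subring]
  and mult_mem = subring_mult[OF subring]
  and sum_mem = subring_sum[OF subring]

lemma left_ideal_add: "left_ideal T J \<Longrightarrow> a \<in> J \<Longrightarrow> b \<in> J \<Longrightarrow> a + b \<in> J"
  unfolding left_ideal_def using diff_minus_eq_add[of a b] diff_0[of b] by metis

lemma left_ideal_mult: "left_ideal T J \<Longrightarrow> A \<in> T \<Longrightarrow> a \<in> J \<Longrightarrow> A ** a \<in> J"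
  unfolding left_ideal_def by blast

lemma left_ideal_annihilator: "left_ideal T {a \<in> T. \<forall>b\<in>B. a *v b = 0}"
  by (auto simp: left_ideal_def zero_mem diff_mem mult_mem matrix_vector_mult_diff_rdistrib
      simp flip: matrix_vector_mul_assoc)

lemma invariant_subspace_orbit:
  assumes J: "left_ideal T J"
  shows "invariant_subspace T ((\<lambda>a. a *v u) ` J)"
  unfolding invariant_subspace_def vec.subspace_def
proof (intro conjI ballI allI)
  show "0 \<in> (\<lambda>a. a *v u) ` J" using J by (force simp: left_ideal_def)
next
  fix x y assume "x \<in> (\<lambda>a. a *v u) ` J" "y \<in> (\<lambda>a. a *v u) ` J"
  then obtain a b where "a \<in> J" "b \<in> J" "x = a *v u" "y = b *v u" by blast
  then show "x + y \<in> (\<lambda>a. a *v u) ` J"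
    using left_ideal_add[OF J] by (force simp: matrix_vector_mult_add_rdistrib)
next
  fix c x assume "x \<in> (\<lambda>a. a *v u) ` J"
  then obtain a where "a \<in> J" "x = a *v u" by blast
  then show "c *s x \<in> (\<lambda>a. a *v u) ` J"
    using left_ideal_mult[OF J mat_mem]
    by (force simp: mat_matrix_vector_mult simp flip: matrix_vector_mul_assoc)
next
  fix A x assume "A \<in> T" "x \<in> (\<lambda>a. a *v u) ` J"
  then obtain a where "a \<in> J" "x = a *v u" by blast
  then show "A *v x \<in> (\<lambda>a. a *v u) ` J"
    using left_ideal_mult[OF J \<open>A \<in> T\<close>] by (force simp: matrix_vector_mul_assoc)
qed

lemma orbit_eq_UNIV:
  assumes "irreducible_action T" and "w \<noteq> 0"
  shows "(\<lambda>A. A *v w) ` T = UNIV"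
proof -
  have "left_ideal T T" by (simp add: left_ideal_def zero_mem diff_mem mult_mem)
  moreover have "w \<in> (\<lambda>A. A *v w) ` T" using mat_mem[of 1] by force
  ultimately show ?thesis
    using assms invariant_subspace_orbit by (fastforce simp: irreducible_action_def)
qed

lemma left_ideal_induced_map:
  assumes J: "left_ideal T J"
    and onto: "\<forall>x. \<exists>a\<in>J. a *v u = x" and ker: "\<forall>a\<in>J. a *v u = 0 \<longrightarrow> a *v v = 0"
  obtains \<phi> where "Vector_Spaces.linear (*s) (*s) \<phi>" and "\<And>a. a \<in> J \<Longrightarrow> \<phi> (a *v u) = a *v v"
proof -
  define \<phi> where "\<phi> x = (SOME a. a \<in> J \<and> a *v u = x) *v v" for x
  have \<phi>: "\<phi> x = a *v v" if a: "a \<in> J" "a *v u = x" for a x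
  proof -
    define a' where "a' = (SOME a. a \<in> J \<and> a *v u = x)"
    have "\<exists>a. a \<in> J \<and> a *v u = x" using onto by blast
    then have a': "a' \<in> J" "a' *v u = x" unfolding a'_def by (metis (mono_tags, lifting) someI_ex)+
    have "(a' - a) *v u = 0" using a' a(2) by (simp add: matrix_vector_mult_diff_rdistrib)
    then have "(a' - a) *v v = 0" using ker J a'(1) a(1) by (auto simp: left_ideal_def)
    then show ?thesis by (simp add: \<phi>_def a'_def[symmetric] matrix_vector_mult_diff_rdistrib)
  qed
  have "Vector_Spaces.linear (*s) (*s) \<phi>"
    unfolding Vector_Spaces.linear_iff
  proof (intro conjI allI vec.vector_space_axioms)
    fix x y
    obtain a b where "a \<in> J" "a *v u = x" "b \<in> J" "b *v u = y" using onto by blast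
    then have "\<phi> (x + y) = (a + b) *v v"
      using \<phi>[OF left_ideal_add[OF J]] by (simp add: matrix_vector_mult_add_rdistrib)
    then show "\<phi> (x + y) = \<phi> x + \<phi> y"
      using \<phi> \<open>a \<in> J\<close> \<open>a *v u = x\<close> \<open>b \<in> J\<close> \<open>b *v u = y\<close>
      by (simp add: matrix_vector_mult_add_rdistrib)
  next
    fix c x
    obtain a where "a \<in> J" "a *v u = x" using onto by blast
    moreover have "mat c ** a \<in> J" using left_ideal_mult[OF J mat_mem \<open>a \<in> J\<close>] .
    ultimately show "\<phi> (c *s x) = c *s \<phi> x"
      using \<phi> by (simp add: mat_matrix_vector_mult flip: matrix_vector_mul_assoc)
  qed
  then show ?thesis using that \<phi> by blast
qed

lemma left_ideal_map_scalar:
  assumes scalar: "centralizer T \<subseteq> range mat" and J: "left_ideal T J"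
    and onto: "\<forall>x. \<exists>a\<in>J. a *v u = x" and ker: "\<forall>a\<in>J. a *v u = 0 \<longrightarrow> a *v v = 0"
  shows "\<exists>c. \<forall>a\<in>J. a *v v = c *s (a *v u)"
proof -
  obtain \<phi> where lin: "Vector_Spaces.linear (*s) (*s) \<phi>" and \<phi>: "\<And>a. a \<in> J \<Longrightarrow> \<phi> (a *v u) = a *v v"
    using left_ideal_induced_map[OF J onto ker] by blast
  have \<Phi>: "matrix \<phi> *v x = \<phi> x" for x using lin by (rule matrix_works)
  \<comment> \<open>The matrix of \<open>\<phi>\<close> commutes with \<open>T\<close> because \<open>J\<close> is a left ideal.\<close>
  have "(matrix \<phi> ** A) *v x = (A ** matrix \<phi>) *v x" if "A \<in> T" for A x
  proof -
    obtain a where a: "a \<in> J" "a *v u = x" using onto by blast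
    have "(A ** a) *v u = A *v x" using a(2) by (simp flip: matrix_vector_mul_assoc)
    then have "\<phi> (A *v x) = A *v (a *v v)"
      using \<phi>[OF left_ideal_mult[OF J that a(1)]] by (simp add: matrix_vector_mul_assoc)
    then show ?thesis using \<phi>[OF a(1)] a(2) by (simp add: \<Phi> flip: matrix_vector_mul_assoc)
  qed
  then have "matrix \<phi> \<in> centralizer T" by (simp add: centralizer_def matrix_eq)
  then obtain c where "matrix \<phi> = mat c" using scalar by blast
  then have "a *v v = c *s (a *v u)" if "a \<in> J" for a
    using \<phi>[OF that] \<Phi>[of "a *v u"] by (simp add: mat_matrix_vector_mult)
  then show ?thesis by blast
qed

lemma exists_annihilator:
  assumes irred: "irreducible_action T" and scalar: "centralizer T \<subseteq> range mat"
  shows "finite B \<Longrightarrow> v \<notin> vec.span B \<Longrightarrow> \<exists>a\<in>T. (\<forall>b\<in>B. a *v b = 0) \<and> a *v v \<noteq> 0"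
proof (induction B arbitrary: v rule: finite_induct)
  case empty
  then show ?case using mat_mem[of 1] by (intro bexI[of _ "mat 1"]) auto
next
  case (insert u B)
  define J where "J = {a \<in> T. \<forall>b\<in>B. a *v b = 0}"
  have J: "left_ideal T J" unfolding J_def by (rule left_ideal_annihilator)
  show ?case
  proof (rule ccontr)
    assume "\<not> ?case"
    then have ker: "\<forall>a\<in>J. a *v u = 0 \<longrightarrow> a *v v = 0" by (auto simp: J_def)
    have v: "v \<notin> vec.span B" using insert.prems vec.span_mono[of B "insert u B"] by blast
    show False
    proof (cases "u \<in> vec.span B")
      case True
      obtain a where a: "a \<in> J" "a *v v \<noteq> 0" using insert.IH[OF v] by (auto simp: J_def)
      then have "a *v u = 0"
        using vec.linear_eq_0_on_span[OF matrix_vector_mul_linear_gen _ True] by (auto simp: J_def)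
      then show False using ker a by blast
    next
      case False
      \<comment> \<open>\<open>J u\<close> is a nonzero invariant subspace, so \<open>a u \<mapsto> a v\<close> is a scalar \<open>c\<close> on it,
        and \<open>v - c u\<close> is killed by \<open>J\<close>, hence lies in the span of \<open>B\<close>.\<close>
      obtain a1 where "a1 \<in> J" "a1 *v u \<noteq> 0" using insert.IH[OF False] by (auto simp: J_def)
      then have "(\<lambda>a. a *v u) ` J = UNIV"
        using irred invariant_subspace_orbit[OF J, of u] by (auto simp: irreducible_action_def)
      then have "\<forall>x. \<exists>a\<in>J. a *v u = x" by (metis UNIV_I image_iff)
      then obtain c where c: "\<forall>a\<in>J. a *v v = c *s (a *v u)"
        using left_ideal_map_scalar[OF scalar J _ ker] by blast
      have "v - c *s u \<in> vec.span B"
      proof (rule ccontr)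
        assume "v - c *s u \<notin> vec.span B"
        then obtain a where "a \<in> J" "a *v (v - c *s u) \<noteq> 0" using insert.IH by (auto simp: J_def)
        then show False using c by (simp add: matrix_vector_mult_diff_distrib vector_scalar_commute)
      qed
      then have "v \<in> vec.span (insert u B)" using vec.span_breakdown_eq by blast
      then show False using insert.prems by blast
    qed
  qed
qed

lemma exists_axis_annihilator:
  assumes irred: "irreducible_action T" and scalar: "centralizer T \<subseteq> range mat"
  shows "\<exists>a. a \<in> T \<and> (\<forall>j. j \<noteq> i \<longrightarrow> a *v axis j 1 = 0) \<and> a *v axis i 1 \<noteq> 0"
proof -
  let ?B = "(\<lambda>j. axis j 1) ` (UNIV - {i})"
  have "vec.span ?B \<subseteq> {x. x $ i = 0}"
    by (rule vec.span_minimal) (auto simp: vec.subspace_def axis_def)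
  then have "axis i 1 \<notin> vec.span ?B" by auto
  moreover have "finite ?B" by simp
  ultimately obtain a where "a \<in> T" "\<forall>b\<in>?B. a *v b = 0" "a *v axis i 1 \<noteq> 0"
    using exists_annihilator[OF irred scalar] by blast
  then show ?thesis by blast
qed

theorem eq_UNIV_if_irreducible:
  assumes irred: "irreducible_action T" and scalar: "centralizer T \<subseteq> range mat"
  shows "T = UNIV"
proof -
  have "\<forall>i. \<exists>a. a \<in> T \<and> (\<forall>j. j \<noteq> i \<longrightarrow> a *v axis j 1 = 0) \<and> a *v axis i 1 \<noteq> 0"
    using exists_axis_annihilator[OF irred scalar] by blast
  from choice[OF this] obtain a where
    a: "\<And>i. a i \<in> T" "\<And>i j. j \<noteq> i \<Longrightarrow> a i *v axis j 1 = 0" "\<And>i. a i *v axis i 1 \<noteq> 0"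
    by blast
  \<comment> \<open>Since \<open>T a_i e_i\<close> is everything, each column of \<open>M\<close> is \<open>b_i a_i e_i\<close> for some \<open>b_i \<in> T\<close>,
    and then \<open>M = \<Sum> b_i a_i\<close>.\<close>
  have "M \<in> T" for M
  proof -
    have "M *v axis i 1 \<in> (\<lambda>A. A *v (a i *v axis i 1)) ` T" for i
      using orbit_eq_UNIV[OF irred a(3)[of i]] by simp
    then have "\<forall>i. \<exists>b. b \<in> T \<and> b *v (a i *v axis i 1) = M *v axis i 1"
      by (simp add: image_iff) (metis)
    from choice[OF this] obtain b
      where b: "\<And>i. b i \<in> T" "\<And>i. b i *v (a i *v axis i 1) = M *v axis i 1"
      by blast
    have "(\<Sum>i\<in>UNIV. b i ** a i) = M"
    proof (rule matrix_eqI_axis)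
      fix j
      have "(b i ** a i) *v axis j 1 = (if i = j then M *v axis j 1 else 0)" for i
        using a(2)[of j i] b(2) by (cases "i = j") (simp_all flip: matrix_vector_mul_assoc)
      then show "(\<Sum>i\<in>UNIV. b i ** a i) *v axis j 1 = M *v axis j 1"
        by (simp add: sum_matrix_vector_mult)
    qed
    moreover have "(\<Sum>i\<in>UNIV. b i ** a i) \<in> T" using a(1) b(1) by (intro sum_mem mult_mem)
    ultimately show ?thesis by simp
  qed
  then show ?thesis by auto
qed

end


section \<open>Finite fields of matrices\<close>

definition mat_order :: "'a::semiring_1^'n^'n \<Rightarrow> nat" where
  "mat_order g = (LEAST p. 0 < p \<and> matpow g p = mat 1)"

context
  fixes g :: "'a::semiring_1^'n^'n" and N :: nat
  assumes N: "0 < N" "matpow g N = mat 1"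
begin

lemma mat_order_pos: "0 < mat_order g"
  and matpow_mat_order: "matpow g (mat_order g) = mat 1"
  using LeastI[of "\<lambda>p. 0 < p \<and> matpow g p = mat 1" N] N by (auto simp: mat_order_def)

lemma mat_order_le: "0 < p \<Longrightarrow> matpow g p = mat 1 \<Longrightarrow> mat_order g \<le> p"
  unfolding mat_order_def by (rule Least_le) simp

lemma matpow_mod_mat_order: "matpow g i = matpow g (i mod mat_order g)"
proof -
  have "matpow g (mat_order g * (i div mat_order g)) = mat 1"
    by (simp add: matpow_mult matpow_mat_order matpow_mat_1)
  then show ?thesis
    using matpow_add[of g "i mod mat_order g" "mat_order g * (i div mat_order g)"] by simp
qed

lemma matpow_eq_iff_mod: "matpow g i = matpow g j \<longleftrightarrow> i mod mat_order g = j mod mat_order g"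
proof -
  let ?P = "mat_order g"
  have le: "a = b" if ab: "a \<le> b" "b < ?P" "matpow g a = matpow g b" for a b
  proof (rule ccontr)
    assume "a \<noteq> b"
    have inv: "matpow g a ** matpow g (?P - a) = mat 1"
      using ab(1,2) by (simp add: matpow_mat_order flip: matpow_add)
    have "matpow g (b - a) = matpow g (b - a) ** (matpow g a ** matpow g (?P - a))"
      by (simp add: inv)
    also have "\<dots> = matpow g b ** matpow g (?P - a)"
      using ab(1) by (simp add: matrix_mul_assoc flip: matpow_add)
    also have "\<dots> = mat 1" using ab(3) inv by simp
    finally have "?P \<le> b - a" using ab(1) \<open>a \<noteq> b\<close> by (intro mat_order_le) auto
    then show False using ab(2) by simp
  qed
  have "i mod ?P = j mod ?P" if eq: "matpow g (i mod ?P) = matpow g (j mod ?P)"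
  proof (cases "i mod ?P \<le> j mod ?P")
    case True
    then show ?thesis using le[OF True _ eq] mat_order_pos by simp
  next
    case False
    then show ?thesis using le[of "j mod ?P" "i mod ?P"] eq mat_order_pos by simp
  qed
  moreover have "matpow g i = matpow g j \<longleftrightarrow> matpow g (i mod ?P) = matpow g (j mod ?P)"
    using matpow_mod_mat_order[of i] matpow_mod_mat_order[of j] by simp
  ultimately show ?thesis by auto
qed

lemma matpow_eq_1_iff_dvd: "matpow g i = mat 1 \<longleftrightarrow> mat_order g dvd i"
  using matpow_eq_iff_mod[of i 0] by (simp add: dvd_eq_mod_eq_0)

lemma inj_on_matpow: "inj_on (matpow g) {..<mat_order g}"
  by (rule inj_onI) (simp add: matpow_eq_iff_mod)

end

locale cyclic_matrix_field =
  fixes D :: "('a::{field,finite}^'n^'n) set" and g :: "'a^'n^'n"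
  assumes subring: "is_subring D" and mat_mem: "mat c \<in> D"
    and nonzero_eq_powers: "D - {0} = range (matpow g)"
    and finite_order: "\<exists>N>0. matpow g N = mat 1"
begin

lemma order: "0 < mat_order g" "matpow g (mat_order g) = mat 1"
  and matpow_eq_iff_mod: "matpow g i = matpow g j \<longleftrightarrow> i mod mat_order g = j mod mat_order g"
  and matpow_eq_1_iff_dvd: "matpow g i = mat 1 \<longleftrightarrow> mat_order g dvd i"
proof -
  obtain N where N: "0 < N" "matpow g N = mat 1" using finite_order by blast
  show "0 < mat_order g" "matpow g (mat_order g) = mat 1"
    by (rule mat_order_pos[OF N], rule matpow_mat_order[OF N])
  show "matpow g i = matpow g j \<longleftrightarrow> i mod mat_order g = j mod mat_order g"
    by (rule matpow_eq_iff_mod[OF N])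
  show "matpow g i = mat 1 \<longleftrightarrow> mat_order g dvd i"
    by (rule matpow_eq_1_iff_dvd[OF N])
qed

lemmas zero_mem = subring_zero[OF subring]
  and diff_mem = subring_diff[OF subring]
  and mult_mem = subring_mult[OF subring]

lemma matpow_mem: "matpow g i \<in> D" and matpow_neq_0: "matpow g i \<noteq> 0"
  using nonzero_eq_powers by blast+

lemma nonzero_eq_powers_less: "D - {0} = matpow g ` {..<mat_order g}"
proof -
  have "matpow g i \<in> matpow g ` {..<mat_order g}" for i
    using matpow_eq_iff_mod[of i "i mod mat_order g"] order(1) by auto
  then show ?thesis unfolding nonzero_eq_powers by blast
qed

lemma card_eq: "card D = Suc (mat_order g)"
proof -
  have "card (D - {0}) = mat_order g"
    using card_image[OF inj_on_matpow[OF order]] by (simp add: nonzero_eq_powers_less)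
  then show ?thesis using card.remove[OF _ zero_mem] by simp
qed

lemma eq_0_or_matpow: "d \<in> D \<Longrightarrow> d = 0 \<or> (\<exists>i. d = matpow g i)"
  using nonzero_eq_powers by blast

lemma commute: "d \<in> D \<Longrightarrow> e \<in> D \<Longrightarrow> d ** e = e ** d"
  using eq_0_or_matpow[of d] eq_0_or_matpow[of e] matpow_commute by auto

lemma eq_poly_mat:
  assumes "d \<in> D"
  shows "\<exists>p. d = poly_mat p g"
proof (cases "d = 0")
  case True
  then show ?thesis by (intro exI[of _ 0]) simp
next
  case False
  then obtain i where "d = matpow g i" using eq_0_or_matpow assms by blast
  then show ?thesis by (intro exI[of _ "monom 1 i"]) (simp add: poly_mat_monom)
qed

lemma nonzero_imp_injective:
  assumes "d \<in> D" "d \<noteq> 0" "d *v x = 0"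
  shows "x = 0"
proof -
  obtain i where i: "d = matpow g i" using assms eq_0_or_matpow by blast
  have "i * (mat_order g - 1) + i = mat_order g * i"
    using order(1) by (cases "mat_order g") (simp_all add: algebra_simps)
  then have "matpow g (i * (mat_order g - 1)) ** d = matpow g (mat_order g * i)"
    by (simp add: i flip: matpow_add)
  also have "\<dots> = mat 1" by (simp add: matpow_mult order matpow_mat_1)
  finally have "x = matpow g (i * (mat_order g - 1)) *v (d *v x)"
    by (simp add: matrix_vector_mul_assoc)
  then show ?thesis using assms(3) by simp
qed

lemma card_eq_CARD_power: "\<exists>m. card D = CARD('a) ^ m"
proof -
  define u :: "'a^'n" where "u = axis undefined 1"
  have u: "u \<noteq> 0" by (simp add: u_def)
  have "inj_on (\<lambda>d. d *v u) D"
  proof (rule inj_onI)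
    fix d e assume "d \<in> D" "e \<in> D" "d *v u = e *v u"
    then show "d = e"
      using nonzero_imp_injective[of "d - e" u] diff_mem u
      by (auto simp: matrix_vector_mult_diff_rdistrib)
  qed
  moreover have "vec.subspace ((\<lambda>d. d *v u) ` D)"
    unfolding vec.subspace_def
  proof (intro conjI ballI allI)
    show "0 \<in> (\<lambda>d. d *v u) ` D" using zero_mem by force
  next
    fix x y assume "x \<in> (\<lambda>d. d *v u) ` D" "y \<in> (\<lambda>d. d *v u) ` D"
    then obtain d e where "d \<in> D" "e \<in> D" "x = d *v u" "y = e *v u" by blast
    moreover have "d + e \<in> D" using diff_mem[OF \<open>d \<in> D\<close> diff_mem[OF zero_mem \<open>e \<in> D\<close>]] by simp
    ultimately show "x + y \<in> (\<lambda>d. d *v u) ` D"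
      by (force simp: matrix_vector_mult_add_rdistrib)
  next
    fix c x assume "x \<in> (\<lambda>d. d *v u) ` D"
    then obtain d where "d \<in> D" "x = d *v u" by blast
    moreover have "mat c ** d \<in> D" using mult_mem[OF mat_mem \<open>d \<in> D\<close>] .
    ultimately show "c *s x \<in> (\<lambda>d. d *v u) ` D"
      by (force simp: mat_matrix_vector_mult simp flip: matrix_vector_mul_assoc)
  qed
  ultimately have "card D = CARD('a) ^ vec.dim ((\<lambda>d. d *v u) ` D)"
    using card_subspace card_image by fastforce
  then show ?thesis by blast
qed

lemma matpow_CARD_power_diff:
  assumes "d \<in> D" "e \<in> D"
  shows "matpow (d - e) (CARD('a) ^ j) = matpow d (CARD('a) ^ j) - matpow e (CARD('a) ^ j)"
proof -
  obtain p r where "d = poly_mat p g" "e = poly_mat r g" using assms eq_poly_mat by blast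
  then show ?thesis by (simp add: matpow_poly_mat_CARD_power flip: poly_mat_diff)
qed

lemma matpow_eq_1_if_matpow_Suc_eq:
  assumes "d \<in> D" "d \<noteq> 0" "matpow d (Suc n) = d"
  shows "matpow d n = mat 1"
proof -
  have "d *v ((matpow d n - mat 1) *v v) = 0" for v
    using assms(3) by (simp add: matrix_vector_mul_assoc matrix_diff_ldistrib)
  then have "(matpow d n - mat 1) *v v = 0" for v
    using nonzero_imp_injective assms(1,2) by blast
  then show ?thesis by (simp add: matrix_eq matrix_vector_mult_diff_rdistrib)
qed

definition fixed_subring :: "nat \<Rightarrow> ('a^'n^'n) set" where
  "fixed_subring j = {x \<in> D. matpow x (CARD('a) ^ j) = x}"

lemma mat_mem_fixed_subring: "mat a \<in> fixed_subring j"
  using mat_mem by (simp add: fixed_subring_def matpow_mat power_CARD_power_eq_same)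

lemma is_subring_fixed_subring: "is_subring (fixed_subring j)"
  unfolding is_subring_def
proof (intro conjI ballI)
  show "0 \<in> fixed_subring j" using mat_mem_fixed_subring[of 0] by simp
  fix x y assume "x \<in> fixed_subring j" "y \<in> fixed_subring j"
  then show "x - y \<in> fixed_subring j" "x ** y \<in> fixed_subring j"
    using matpow_CARD_power_diff matpow_mult_distrib[OF commute, of x y] diff_mem mult_mem
    by (simp_all add: fixed_subring_def)
qed

lemma matpow_mem_fixed_subring: "x \<in> fixed_subring j \<Longrightarrow> matpow x i \<in> fixed_subring j"
  by (induction i) (simp_all add: mat_mem_fixed_subring subring_mult[OF is_subring_fixed_subring])

lemma fixed_subring_nonzero_eq:
  assumes c: "mat_order g = c * (CARD('a) ^ l - 1)" and l: "0 < l"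
  shows "fixed_subring l - {0} = (\<lambda>i. matpow g (c * i)) ` {..<CARD('a) ^ l - 1}"
    and "inj_on (\<lambda>i. matpow g (c * i)) {..<CARD('a) ^ l - 1}"
proof -
  let ?P = "mat_order g" and ?L = "CARD('a) ^ l"
  have "CARD('a) ^ 1 \<le> ?L" using CARD_ge_2[where 'a='a] l by (intro power_increasing) auto
  then have L2: "2 \<le> ?L" using CARD_ge_2[where 'a='a] by simp
  have c0: "0 < c" using order(1) c by (cases c) auto
  show "fixed_subring l - {0} = (\<lambda>i. matpow g (c * i)) ` {..<?L - 1}"
  proof
    show "fixed_subring l - {0} \<subseteq> (\<lambda>i. matpow g (c * i)) ` {..<?L - 1}"
    proof
      fix x assume x: "x \<in> fixed_subring l - {0}"
      then obtain i where i: "i < ?P" "x = matpow g i"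
        using nonzero_eq_powers_less by (auto simp: fixed_subring_def)
      have "matpow g (i * ?L) = matpow g i" using x i by (simp add: fixed_subring_def matpow_mult)
      moreover have "i * ?L = i + i * (?L - 1)" using L2 by (cases ?L) simp_all
      ultimately have "(i + i * (?L - 1)) mod ?P = i mod ?P" by (simp add: matpow_eq_iff_mod)
      then have "?P dvd i * (?L - 1)" using mod_eq_dvd_iff_nat[of i "i + i * (?L - 1)"] by simp
      then have "c * (?L - 1) dvd i * (?L - 1)" by (simp add: c)
      then have "c dvd i" using L2 by simp
      then obtain i' where "i = c * i'" by blast
      moreover have "i' < ?L - 1" using i(1) c c0 \<open>i = c * i'\<close> by simp
      ultimately show "x \<in> (\<lambda>i. matpow g (c * i)) ` {..<?L - 1}" using i by auto
    qed
  next
    show "(\<lambda>i. matpow g (c * i)) ` {..<?L - 1} \<subseteq> fixed_subring l - {0}"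
    proof clarify
      fix i assume "i < ?L - 1"
      have "c * i * ?L = c * i + ?P * i" using L2 c by (cases ?L) (auto simp: algebra_simps)
      then have "matpow (matpow g (c * i)) ?L = matpow g (c * i)"
        by (simp add: matpow_eq_iff_mod flip: matpow_mult)
      then show "matpow g (c * i) \<in> fixed_subring l - {0}"
        by (simp add: fixed_subring_def matpow_mem matpow_neq_0)
    qed
  qed
  show "inj_on (\<lambda>i. matpow g (c * i)) {..<?L - 1}"
  proof (rule inj_onI)
    fix i j assume "i \<in> {..<?L - 1}" "j \<in> {..<?L - 1}" "matpow g (c * i) = matpow g (c * j)"
    moreover have "c * i < ?P" "c * j < ?P" if "i < ?L - 1" "j < ?L - 1" using that c c0 by simp_all
    ultimately show "i = j" using c0 by (simp add: matpow_eq_iff_mod)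
  qed
qed

lemma field_subring_fixed_subring:
  assumes m: "card D = CARD('a) ^ m" and l: "0 < l" "l dvd m"
  shows "field_subring_of_card (fixed_subring l) l"
proof -
  let ?L = "CARD('a) ^ l"
  obtain k where "m = l * k" using l(2) by (rule dvdE)
  moreover have "mat_order g = CARD('a) ^ m - 1" using m card_eq by simp
  ultimately have "(?L - 1) dvd mat_order g"
    using power_minus_one_dvd[of "CARD('a)" l k] by simp
  then obtain c where c: "mat_order g = c * (?L - 1)" by (metis dvdE mult.commute)
  have "0 \<in> fixed_subring l" using mat_mem_fixed_subring[of 0] by simp
  then have "card (fixed_subring l) = Suc (card (fixed_subring l - {0}))"
    by (rule card.remove[rotated]) simp
  also have "fixed_subring l - {0} = (\<lambda>i. matpow g (c * i)) ` {..<?L - 1}"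
    by (rule fixed_subring_nonzero_eq(1)[OF c l(1)])
  also have "card \<dots> = ?L - 1"
    using card_image[OF fixed_subring_nonzero_eq(2)[OF c l(1)]] by simp
  finally have card: "card (fixed_subring l) = ?L" by simp
  \<comment> \<open>A nonzero fixed \<open>x\<close> satisfies \<open>x ^ (L - 1) = 1\<close>, so its inverse is the power \<open>x ^ (L - 2)\<close>.\<close>
  have inverse: "\<exists>y\<in>fixed_subring l. x ** y = mat 1" if x: "x \<in> fixed_subring l" "x \<noteq> 0" for x
  proof -
    have L: "?L = Suc (?L - 1)" "?L - 1 = Suc (?L - 2)"
      using CARD_ge_2[where 'a='a] l(1) one_less_power[of "CARD('a)" l] by simp_all
    have "x \<in> D" "matpow x ?L = x" using x(1) by (simp_all add: fixed_subring_def)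
    then have "matpow x (?L - 1) = mat 1"
      using matpow_eq_1_if_matpow_Suc_eq[of x "?L - 1"] L(1) x(2) by metis
    moreover have "x ** matpow x (?L - 2) = matpow x (?L - 1)" using L(2) by (metis matpow.simps(2))
    moreover have "matpow x (?L - 2) \<in> fixed_subring l" using matpow_mem_fixed_subring x(1) .
    ultimately show ?thesis by auto
  qed
  show ?thesis
    unfolding field_subring_of_card_def
  proof (intro conjI ballI bexI[of _ "mat 1"])
    show "x ** y = y ** x" if "x \<in> fixed_subring l" "y \<in> fixed_subring l" for x y
      using that commute by (simp add: fixed_subring_def)
  qed (use is_subring_fixed_subring card mat_mem_fixed_subring mat_1_neq_0 inverse in auto)
qed

end


section \<open>Subrings containing an element of type \<open>T_k\<close>\<close>

lemma maximal_subring_eqI: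
  assumes "maximal_subring T" "is_subring R" "T \<subseteq> R" "R \<noteq> UNIV"
  shows "T = R"
  using assms unfolding maximal_subring_def by blast

lemma is_subring_stab_ring: "vec.subspace X \<Longrightarrow> is_subring (stab_ring X)"
  unfolding is_subring_def stab_ring_def
  by (auto simp: matrix_vector_mult_diff_rdistrib vec.subspace_diff vec.subspace_0
      simp flip: matrix_vector_mul_assoc)

lemma stab_ring_neq_UNIV:
  assumes "x \<in> X" "x \<noteq> 0" "w \<notin> X"
  shows "stab_ring X \<noteq> UNIV"
proof -
  obtain A where "A *v x = w" using exists_matrix_vector_mult_eq[OF assms(2)] by blast
  then have "A \<notin> stab_ring X" using assms by (auto simp: stab_ring_def)
  then show ?thesis by blast
qed

lemma centralizer_neq_UNIV:
  assumes "\<not> K \<subseteq> range mat"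
  shows "centralizer K \<noteq> UNIV"
proof -
  obtain x where "x \<in> K" "\<forall>c. x \<noteq> mat c" using assms by blast
  then obtain A where "A ** x \<noteq> x ** A" using central_matrix_is_scalar by blast
  then have "A \<notin> centralizer K" using \<open>x \<in> K\<close> by (auto simp: centralizer_def)
  then show ?thesis by blast
qed

locale type_T_setting =
  fixes t :: "'a::{field,finite}^'n^'n" and U W :: "('a^'n) set" and k :: nat
  assumes k_pos: "1 \<le> k" and k_less: "2 * k < CARD('n)"
    and U: "vec.subspace U" "vec.dim U = k"
    and W: "vec.subspace W" "vec.dim W = CARD('n) - k"
    and inter: "U \<inter> W = {0}" and sum: "{u + w | u w. u \<in> U \<and> w \<in> W} = UNIV"
    and type_T: "type_T t U W"
begin

sublocale U: singer_block t U
  using U type_T by unfold_locales (auto simp: type_T_def)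

sublocale W: singer_block t W
  using W type_T by unfold_locales (auto simp: type_T_def)

lemma N_U_eq: "U.N = CARD('a) ^ k - 1" and N_W_eq: "W.N = CARD('a) ^ (CARD('n) - k) - 1"
  by (simp_all add: U.N_def W.N_def U W)

lemma N_U_less_N_W: "U.N < W.N"
proof -
  have "CARD('a) ^ k < CARD('a) ^ (CARD('n) - k)"
    using k_less CARD_ge_2[where 'a='a] by (intro power_strict_increasing) auto
  moreover have "1 \<le> CARD('a) ^ k" using CARD_ge_2[where 'a='a] by simp
  ultimately show ?thesis unfolding N_U_eq N_W_eq by linarith
qed

lemma decompose: "\<exists>u\<in>U. \<exists>w\<in>W. v = u + w"
  using sum by blast

lemma matrix_eqI_on_U_W:
  assumes "\<forall>x\<in>U. A *v x = B *v x" "\<forall>x\<in>W. A *v x = B *v x"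
  shows "A = B"
proof -
  have "A *v v = B *v v" for v
    using decompose[of v] assms by (auto simp: matrix_vector_right_distrib)
  then show ?thesis by (simp add: matrix_eq)
qed

lemma matpow_N_U_N_W: "matpow t (U.N * W.N) = mat 1"
  by (rule matrix_eqI_on_U_W)
    (use U.matpow_N_mult[of _ W.N] W.matpow_N_mult[of _ U.N] in \<open>simp_all add: mult.commute\<close>)

text \<open>The projections onto \<open>U\<close> and \<open>W\<close> along the decomposition are polynomials in \<open>t\<close>: on \<open>U\<close>
  every summand of \<open>proj_U\<close> is the identity and \<open>W.N = -1\<close> in the field, while on \<open>W\<close> the
  sum is fixed by \<open>t ^ U.N\<close>, which acts without nonzero fixed points since \<open>W.N\<close> does not divide
  \<open>U.N\<close>.\<close>

definition proj_U where "proj_U = - (\<Sum>i<W.N. matpow t (U.N * i))"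
definition proj_W where "proj_W = mat 1 - proj_U"

lemma of_nat_N_W: "of_nat W.N = (-1 :: 'a)"
proof -
  have "1 \<le> CARD('a) ^ (CARD('n) - k)" using CARD_ge_2[where 'a='a] by simp
  moreover have "(of_nat (CARD('a) ^ (CARD('n) - k)) :: 'a) = 0"
    using k_less by (simp add: of_nat_CARD_eq_0)
  ultimately show ?thesis by (simp add: N_W_eq of_nat_diff)
qed

lemma proj_U_on_U: "x \<in> U \<Longrightarrow> proj_U *v x = x"
proof -
  assume x: "x \<in> U"
  have "proj_U *v x = - (\<Sum>i<W.N. x)"
    using U.matpow_N_mult[OF x]
    by (simp add: proj_U_def matrix_vector_mult_minus_left sum_matrix_vector_mult)
  also have "\<dots> = x"
  proof -
    have "(\<Sum>i<W.N. x) $ j = - (x $ j)" for j by (simp only: sum_component) (simp add: of_nat_N_W)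
    then show ?thesis by (simp add: vec_eq_iff)
  qed
  finally show ?thesis .
qed

lemma proj_U_on_W: "x \<in> W \<Longrightarrow> proj_U *v x = 0"
proof -
  assume x: "x \<in> W"
  define a where "a i = matpow t (U.N * i) *v x" for i
  define S where "S = (\<Sum>i<W.N. a i)"
  have "matpow t U.N *v a i = a (Suc i)" for i
    by (simp add: a_def matrix_vector_mul_assoc flip: matpow_add)
  then have "matpow t U.N *v S = (\<Sum>i<W.N. a (Suc i))" by (simp add: S_def vec.sum)
  also have "\<dots> = (\<Sum>i<W.N. a (Suc i) - a i) + S" by (simp add: S_def sum_subtractf)
  also have "(\<Sum>i<W.N. a (Suc i) - a i) = a W.N - a 0" by (rule sum_lessThan_telescope)
  also have "a W.N = a 0" using W.matpow_N_mult[OF x, of U.N] by (simp add: a_def mult.commute)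
  finally have "matpow t U.N *v S = S" by simp
  moreover have "S \<in> W"
    unfolding S_def a_def using W.matpow_maps_to[OF x] W(1) by (rule vec.subspace_sum[rotated])
  moreover have "\<not> W.N dvd U.N" using N_U_less_N_W U.N_pos by (auto dest: dvd_imp_le)
  ultimately have "S = 0" using W.matpow_fixes_nonzero_imp_dvd by blast
  then show "proj_U *v x = 0"
    by (simp add: proj_U_def matrix_vector_mult_minus_left sum_matrix_vector_mult S_def a_def)
qed

lemma proj_W_on_U: "x \<in> U \<Longrightarrow> proj_W *v x = 0"
  and proj_W_on_W: "x \<in> W \<Longrightarrow> proj_W *v x = x"
  by (simp_all add: proj_W_def matrix_vector_mult_diff_rdistrib proj_U_on_U proj_U_on_W)

lemma proj_U_in_U: "proj_U *v v \<in> U" and proj_W_in_W: "proj_W *v v \<in> W"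
  and proj_U_add_proj_W: "proj_U *v v + proj_W *v v = v"
  using decompose[of v]
  by (auto simp: matrix_vector_right_distrib proj_U_on_U proj_U_on_W proj_W_on_U proj_W_on_W)

lemma mat_eq_combination:
  assumes "c \<noteq> 0"
  shows "\<exists>i j. mat c = matpow t i ** proj_U + matpow t j ** proj_W"
proof -
  obtain i where i: "\<forall>x\<in>U. matpow t i *v x = c *s x" using U.scalar_eq_matpow[OF assms] by blast
  obtain j where j: "\<forall>x\<in>W. matpow t j *v x = c *s x" using W.scalar_eq_matpow[OF assms] by blast
  have "mat c = matpow t i ** proj_U + matpow t j ** proj_W"
    by (rule matrix_eqI_on_U_W)
      (use i j in \<open>simp_all add: matrix_vector_mult_add_rdistrib mat_matrix_vector_mult
         proj_U_on_U proj_U_on_W proj_W_on_U proj_W_on_W flip: matrix_vector_mul_assoc\<close>)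
  then show ?thesis by blast
qed

context
  fixes S assumes S: "is_subring S" "t \<in> S"
begin

lemma matpow_mem: "matpow t m \<in> S"
proof -
  have Suc: "matpow t (Suc m) \<in> S" for m
    using S by (induction m) (auto simp: is_subring_def)
  \<comment> \<open>Subrings need not contain the identity, but this one does: it is a power of \<open>t\<close>.\<close>
  have "U.N * W.N = Suc (U.N * W.N - 1)" using U.N_pos W.N_pos by simp
  then have "mat 1 \<in> S" using Suc matpow_N_U_N_W by metis
  then show ?thesis using Suc by (cases m) simp_all
qed

lemma proj_U_mem: "proj_U \<in> S"
  unfolding proj_U_def by (intro subring_uminus[OF S(1)] subring_sum[OF S(1)] matpow_mem)

lemma proj_W_mem: "proj_W \<in> S"
  unfolding proj_W_def using matpow_mem[of 0] proj_U_mem by (simp add: subring_diff S(1))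

lemma matrix_algebra_if_mem: "matrix_algebra S"
proof
  fix c
  show "mat c \<in> S"
  proof (cases "c = 0")
    case False
    then obtain i j where "mat c = matpow t i ** proj_U + matpow t j ** proj_W"
      using mat_eq_combination by blast
    then show ?thesis
      using matpow_mem proj_U_mem proj_W_mem by (simp add: subring_add subring_mult S(1))
  qed (simp add: subring_zero S(1))
qed (rule S(1))

lemma invariant_subspace_cases:
  assumes "invariant_subspace S Y"
  shows "Y = {0} \<or> Y = U \<or> Y = W \<or> Y = UNIV"
proof -
  have Y: "vec.subspace Y" and SY: "\<And>A y. A \<in> S \<Longrightarrow> y \<in> Y \<Longrightarrow> A *v y \<in> Y"
    using assms by (auto simp: invariant_subspace_def)
  have pow: "\<forall>j. \<forall>y\<in>Y. matpow t j *v y \<in> Y" using SY matpow_mem by blast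
  have "U \<subseteq> Y" if "\<exists>x\<in>Y \<inter> U. x \<noteq> 0"
    using that U.subset_if_invariant_meets[OF pow vec.subspace_0[OF Y]] by blast
  moreover have "W \<subseteq> Y" if "\<exists>x\<in>Y \<inter> W. x \<noteq> 0"
    using that W.subset_if_invariant_meets[OF pow vec.subspace_0[OF Y]] by blast
  moreover have "Y \<subseteq> U" if "\<not> (\<exists>x\<in>Y \<inter> W. x \<noteq> 0)"
  proof
    fix y assume "y \<in> Y"
    then have "proj_W *v y = 0" using that SY[OF proj_W_mem] proj_W_in_W by blast
    then show "y \<in> U" using proj_U_add_proj_W[of y] proj_U_in_U[of y] by simp
  qed
  moreover have "Y \<subseteq> W" if "\<not> (\<exists>x\<in>Y \<inter> U. x \<noteq> 0)"
  proof
    fix y assume "y \<in> Y"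
    then have "proj_U *v y = 0" using that SY[OF proj_U_mem] proj_U_in_U by blast
    then show "y \<in> W" using proj_U_add_proj_W[of y] proj_W_in_W[of y] by simp
  qed
  moreover have "Y = UNIV" if "U \<subseteq> Y" "W \<subseteq> Y"
  proof -
    have "v \<in> Y" for v
      using decompose[of v] that vec.subspace_add[OF Y] by blast
    then show ?thesis by blast
  qed
  moreover have "Y = {0}" if "Y \<subseteq> U" "Y \<subseteq> W"
    using that inter vec.subspace_0[OF Y] by blast
  ultimately show ?thesis
    by (cases "\<exists>x\<in>Y \<inter> U. x \<noteq> 0"; cases "\<exists>x\<in>Y \<inter> W. x \<noteq> 0") (simp_all add: subset_antisym)
qed

lemma irreducible_action_if_not_stabilizing:
  assumes "\<not> S \<subseteq> stab_ring U" and "\<not> S \<subseteq> stab_ring W"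
  shows "irreducible_action S"
  unfolding irreducible_action_def
proof (intro allI impI)
  fix Y assume Y: "invariant_subspace S Y"
  then have "S \<subseteq> stab_ring Y" by (auto simp: invariant_subspace_def stab_ring_def)
  then have "Y \<noteq> U" "Y \<noteq> W" using assms by auto
  then show "Y = {0} \<or> Y = UNIV" using invariant_subspace_cases[OF Y] by simp
qed

end

end


section \<open>The centralizer of an irreducible subring containing an element of type \<open>T_k\<close>\<close>

lemma matpow_eq_on_invariant:
  assumes "\<forall>x\<in>X. A *v x \<in> X" and "\<forall>x\<in>X. B *v x = A *v x"
  shows "\<forall>x\<in>X. matpow B i *v x = matpow A i *v x"
proof (induction i)
  case (Suc i)
  have "matpow A i *v x \<in> X" if "x \<in> X" for x
    using assms(1) that by (induction i) (auto simp flip: matrix_vector_mul_assoc)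
  then show ?case using Suc assms by (simp flip: matrix_vector_mul_assoc)
qed simp

locale type_T_irreducible = type_T_setting t U W k
  for t :: "'a::{field,finite}^'n^'n" and U W k +
  fixes T
  assumes subring: "is_subring T" and t_mem: "t \<in> T"
    and irreducible: "irreducible_action T" and proper: "T \<noteq> UNIV"
begin

sublocale matrix_algebra T by (rule matrix_algebra_if_mem[OF subring t_mem])

abbreviation D where "D \<equiv> centralizer T"

lemmas D_diff = subring_diff[OF is_subring_centralizer[of T]]
  and D_mult = subring_mult[OF is_subring_centralizer[of T]]

lemma D_matpow: "d \<in> D \<Longrightarrow> matpow d i \<in> D"
  by (induction i) (simp_all add: D_mult mat_in_centralizer)

lemma D_commute: "d \<in> D \<Longrightarrow> A \<in> T \<Longrightarrow> d ** A = A ** d"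
  by (simp add: centralizer_def)

lemma D_nonzero_imp_injective: "d \<in> D \<Longrightarrow> d \<noteq> 0 \<Longrightarrow> d *v x = 0 \<Longrightarrow> x = 0"
  using centralizer_nonzero_imp_injective[OF irreducible] by blast

lemma D_maps_to:
  assumes "d \<in> D"
  shows "x \<in> U \<Longrightarrow> d *v x \<in> U" and "x \<in> W \<Longrightarrow> d *v x \<in> W"
proof -
  have "d *v (P *v x) = P *v (d *v x)" if "P \<in> T" for P
    using D_commute[OF assms that] by (simp add: matrix_vector_mul_assoc)
  then show "x \<in> U \<Longrightarrow> d *v x \<in> U" and "x \<in> W \<Longrightarrow> d *v x \<in> W"
    using proj_U_mem[OF subring t_mem] proj_W_mem[OF subring t_mem] proj_U_in_U proj_W_in_W
      proj_U_on_U proj_W_on_W by metis+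
qed

lemma D_acts_as_matpow:
  assumes X: "X = U \<or> X = W" and d: "d \<in> D" "d \<noteq> 0"
  shows "\<exists>j. \<forall>x\<in>X. d *v x = matpow t j *v x"
proof -
  interpret X: singer_block t X using X U.singer_block_axioms W.singer_block_axioms by auto
  have DX: "d *v x \<in> X" if "x \<in> X" for x using X D_maps_to d that by auto
  obtain x0 where x0: "x0 \<in> X" "x0 \<noteq> 0" using X.exists_nonzero by blast
  then have "d *v x0 \<in> X" "d *v x0 \<noteq> 0" using DX D_nonzero_imp_injective d by auto
  then obtain j where j: "matpow t j *v x0 = d *v x0" using X.transitive x0 by blast
  \<comment> \<open>\<open>d\<close> and \<open>t ^ j\<close> agree at \<open>x0\<close> and commute with the powers of \<open>t\<close>, which move \<open>x0\<close>
    to every nonzero vector of \<open>X\<close>.\<close>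
  have "d *v x = matpow t j *v x" if x: "x \<in> X" for x
  proof (cases "x = 0")
    case False
    then obtain i where i: "matpow t i *v x0 = x" using X.transitive x0 x by blast
    have "d *v x = matpow t i *v (d *v x0)"
      using D_commute[OF d(1) matpow_mem[OF subring t_mem]]
      by (simp add: i[symmetric] matrix_vector_mul_assoc)
    also have "\<dots> = matpow t j *v x"
      by (simp add: j[symmetric] i[symmetric] matrix_vector_mul_assoc matpow_commute)
    finally show ?thesis .
  qed simp
  then show ?thesis by blast
qed

lemma D_eqI_on:
  assumes X: "X = U \<or> X = W" and "d \<in> D" "e \<in> D" and eq: "\<forall>x\<in>X. d *v x = e *v x"
  shows "d = e"
proof (rule ccontr)
  assume "d \<noteq> e"
  obtain x where "x \<in> X" "x \<noteq> 0" using X U.exists_nonzero W.exists_nonzero by blast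
  moreover have "(d - e) *v x = 0" using eq \<open>x \<in> X\<close> by (simp add: matrix_vector_mult_diff_rdistrib)
  ultimately show False
    using D_nonzero_imp_injective[OF D_diff[OF assms(2,3)]] \<open>d \<noteq> e\<close> by simp
qed

lemma D_not_scalar: "\<not> D \<subseteq> range mat"
  using eq_UNIV_if_irreducible[OF irreducible] proper by blast

text \<open>Restriction to \<open>U\<close> embeds the nonzero elements of \<open>D\<close> into the cyclic group generated by
  \<open>t\<close> on \<open>U\<close>; the generator \<open>g\<close> of the image acts on \<open>U\<close> as the least positive power \<open>t ^ s\<close>
  attained.\<close>

definition exponents where
  "exponents = {j. 0 < j \<and> (\<exists>d\<in>D. \<forall>x\<in>U. d *v x = matpow t j *v x)}"

definition s where "s = (LEAST j. j \<in> exponents)"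

definition g where "g = (SOME d. d \<in> D \<and> (\<forall>x\<in>U. d *v x = matpow t s *v x))"

lemma s_mem: "s \<in> exponents" and s_le: "j \<in> exponents \<Longrightarrow> s \<le> j"
proof -
  have "U.N \<in> exponents"
    using U.N_pos U.matpow_N mat_in_centralizer[of 1]
    by (auto simp: exponents_def intro!: bexI[of _ "mat 1"])
  then show "s \<in> exponents" unfolding s_def by (rule LeastI)
  show "j \<in> exponents \<Longrightarrow> s \<le> j" unfolding s_def by (rule Least_le)
qed

lemma g_mem: "g \<in> D" and g_on_U: "\<forall>x\<in>U. g *v x = matpow t s *v x"
proof -
  have "\<exists>d. d \<in> D \<and> (\<forall>x\<in>U. d *v x = matpow t s *v x)" using s_mem by (auto simp: exponents_def)
  from someI_ex[OF this] show "g \<in> D" "\<forall>x\<in>U. g *v x = matpow t s *v x" by (simp_all add: g_def)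
qed

lemma matpow_g_on_U: "\<forall>x\<in>U. matpow g i *v x = matpow t (s * i) *v x"
  using matpow_eq_on_invariant[OF _ g_on_U, of i] U.matpow_maps_to
  by (simp add: matpow_mult)

lemma s_dvd:
  assumes d: "d \<in> D" and j: "\<forall>x\<in>U. d *v x = matpow t j *v x"
  shows "s dvd j"
proof (rule ccontr)
  assume "\<not> s dvd j"
  then have "j mod s \<noteq> 0" by (simp add: dvd_eq_mod_eq_0)
  \<comment> \<open>\<open>d g ^ (i (N - 1))\<close> with \<open>i = j div s\<close> acts on \<open>U\<close> as \<open>t ^ (j mod s)\<close>, contradicting
    the minimality of \<open>s\<close>.\<close>
  define i where "i = j div s"
  have "d ** matpow g (i * (U.N - 1)) \<in> D" using D_mult[OF d D_matpow[OF g_mem]] .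
  moreover have "(d ** matpow g (i * (U.N - 1))) *v x = matpow t (j mod s) *v x" if "x \<in> U" for x
  proof -
    have eq: "j + s * (i * (U.N - 1)) = j mod s + U.N * (s * i)"
      using U.N_pos by (cases U.N) (simp_all add: i_def algebra_simps)
    have "(d ** matpow g (i * (U.N - 1))) *v x = d *v (matpow t (s * (i * (U.N - 1))) *v x)"
      using matpow_g_on_U that by (simp flip: matrix_vector_mul_assoc)
    also have "\<dots> = matpow t j *v (matpow t (s * (i * (U.N - 1))) *v x)"
      using j U.matpow_maps_to[OF that] by blast
    also have "\<dots> = matpow t (j + s * (i * (U.N - 1))) *v x"
      by (simp add: matpow_add matrix_vector_mul_assoc)
    also have "\<dots> = matpow t (j mod s) *v (matpow t (U.N * (s * i)) *v x)"
      unfolding eq by (simp add: matpow_add matrix_vector_mul_assoc)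
    also have "\<dots> = matpow t (j mod s) *v x" using U.matpow_N_mult[OF that] by simp
    finally show ?thesis .
  qed
  ultimately have "j mod s \<in> exponents"
    using \<open>j mod s \<noteq> 0\<close> by (auto simp: exponents_def)
  then show False using s_le s_mem by (simp add: exponents_def) (meson mod_less_divisor not_le)
qed

lemma D_nonzero_eq_powers: "D - {0} = range (matpow g)"
proof
  show "range (matpow g) \<subseteq> D - {0}"
  proof clarify
    fix i
    obtain x where "x \<in> U" "x \<noteq> 0" using U.exists_nonzero by blast
    then have "matpow g i *v x \<noteq> 0" using matpow_g_on_U U.matpow_nonzero by simp
    then show "matpow g i \<in> D - {0}" using D_matpow[OF g_mem] by auto
  qed
next
  show "D - {0} \<subseteq> range (matpow g)"
  proof
    fix d assume "d \<in> D - {0}"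
    then have d: "d \<in> D" "d \<noteq> 0" by auto
    obtain j where j: "\<forall>x\<in>U. d *v x = matpow t j *v x" using D_acts_as_matpow d by blast
    obtain i where "j = s * i" using s_dvd[OF d(1) j] by (rule dvdE)
    then have "\<forall>x\<in>U. d *v x = matpow g i *v x" using j matpow_g_on_U by simp
    then have "d = matpow g i" using D_eqI_on[OF _ d(1) D_matpow[OF g_mem]] by blast
    then show "d \<in> range (matpow g)" by simp
  qed
qed

lemma matpow_g_N: "matpow g U.N = mat 1" "matpow g W.N = mat 1"
proof -
  have "\<forall>x\<in>U. matpow g U.N *v x = mat 1 *v x"
    using matpow_g_on_U[of U.N] U.matpow_N_mult[of _ s] by (simp add: mult.commute)
  then show "matpow g U.N = mat 1"
    using D_eqI_on[OF disjI1[OF refl] D_matpow[OF g_mem] mat_in_centralizer] by blast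
  have "matpow g 1 \<in> D - {0}" unfolding D_nonzero_eq_powers by (rule rangeI)
  then have "g \<noteq> 0" by simp
  then obtain j where j: "\<forall>x\<in>W. g *v x = matpow t j *v x" using D_acts_as_matpow g_mem by blast
  have "\<forall>x\<in>W. matpow g W.N *v x = matpow t (j * W.N) *v x"
    using matpow_eq_on_invariant[OF _ j, of W.N] W.matpow_maps_to by (simp add: matpow_mult)
  then have "\<forall>x\<in>W. matpow g W.N *v x = mat 1 *v x"
    using W.matpow_N_mult[of _ j] by (simp add: mult.commute)
  then show "matpow g W.N = mat 1"
    using D_eqI_on[OF disjI2[OF refl] D_matpow[OF g_mem] mat_in_centralizer] by blast
qed

sublocale D: cyclic_matrix_field D g
proof
  show "\<exists>N>0. matpow g N = mat 1" using matpow_g_N(1) U.N_pos by blast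
qed (simp_all add: is_subring_centralizer mat_in_centralizer D_nonzero_eq_powers)

lemma card_centralizer:
  obtains m where "card D = CARD('a) ^ m" "2 \<le> m" "m dvd k" "m dvd (CARD('n) - k)"
proof -
  obtain m where m: "card D = CARD('a) ^ m" using D.card_eq_CARD_power by blast
  obtain d where d: "d \<in> D" "d \<notin> range mat" using D_not_scalar by blast
  have "card (insert d (range mat)) = Suc CARD('a)"
    using d(2) card_image[OF inj_mat] by simp
  moreover have "card (insert d (range mat)) \<le> card D"
    using d(1) mat_in_centralizer by (intro card_mono) auto
  ultimately have "Suc CARD('a) \<le> CARD('a) ^ m" using m by simp
  moreover have "CARD('a) ^ m \<le> CARD('a) ^ 1" if "m \<le> 1"
    using that CARD_ge_2[where 'a='a] by (intro power_increasing) auto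
  ultimately have m2: "2 \<le> m" by (cases "m \<le> 1") auto
  have order: "mat_order g = CARD('a) ^ m - 1" using D.card_eq m by simp
  have "CARD('a) ^ m - 1 dvd CARD('a) ^ k - 1" "CARD('a) ^ m - 1 dvd CARD('a) ^ (CARD('n) - k) - 1"
    using D.matpow_eq_1_iff_dvd matpow_g_N by (simp_all add: order N_U_eq N_W_eq)
  then have "m dvd k" "m dvd (CARD('n) - k)"
    using power_minus_one_dvd_imp_dvd[OF CARD_ge_2] by blast+
  then show ?thesis using that m m2 by blast
qed

lemma typeII_if_maximal:
  assumes "maximal_subring T"
  shows "\<exists>l. prime l \<and> l dvd k \<and> l dvd CARD('n) \<and> typeII T l"
proof -
  obtain m where m: "card D = CARD('a) ^ m" "2 \<le> m" "m dvd k" "m dvd (CARD('n) - k)"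
    by (rule card_centralizer)
  obtain l where l: "prime l" "l dvd m" using prime_factor_nat[of m] m(2) by auto
  define K where "K = D.fixed_subring l"
  have K: "field_subring_of_card K l"
    unfolding K_def by (rule D.field_subring_fixed_subring[OF m(1) prime_gt_0_nat[OF l(1)] l(2)])
  have "CARD('a) ^ 1 < CARD('a) ^ l"
    using CARD_ge_2[where 'a='a] prime_ge_2_nat[OF l(1)] by (intro power_strict_increasing) auto
  moreover have "card (range (mat :: 'a \<Rightarrow> 'a^'n^'n)) = CARD('a)"
    by (simp add: card_image inj_mat)
  ultimately have "card (range (mat :: 'a \<Rightarrow> 'a^'n^'n)) < card K"
    using K by (simp add: field_subring_of_card_def)
  then have "\<not> K \<subseteq> range mat"
    using card_mono[of "range mat" K] by (auto simp del: card_image)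
  moreover have "T \<subseteq> centralizer K"
    unfolding K_def D.fixed_subring_def by (auto simp: centralizer_def)
  ultimately have "T = centralizer K"
    by (intro maximal_subring_eqI[OF assms is_subring_centralizer] centralizer_neq_UNIV)
  moreover have "CARD('n) = k + (CARD('n) - k)" using k_less by simp
  then have "l dvd CARD('n)"
    using dvd_add[OF dvd_trans[OF l(2) m(3)] dvd_trans[OF l(2) m(4)]] by simp
  ultimately have "typeII T l"
    using assms l(1) K unfolding typeII_def by blast
  then show ?thesis using l(1) dvd_trans[OF l(2) m(3)] \<open>l dvd CARD('n)\<close> by blast
qed

end

theorem lemma5p1:
  fixes t :: "'a::{field,finite}^'n^'n"
    and U W :: "('a^'n) set" and T :: "('a^'n^'n) set" and k :: nat
  assumes "1 \<le> k" and "2 * k < CARD('n)"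
    and "vec.subspace U" and "vec.dim U = k"
    and "vec.subspace W" and "vec.dim W = CARD('n) - k"
    and "U \<inter> W = {0}" and "{u + w | u w. u \<in> U \<and> w \<in> W} = UNIV"
    and "type_T t U W"
    and "maximal_subring T" and "t \<in> T"
  shows "T = stab_ring U \<or> T = stab_ring W \<or>
         (\<exists>l. prime l \<and> l dvd k \<and> l dvd CARD('n) \<and> typeII T l)"
proof -
  interpret type_T_setting t U W k using assms by unfold_locales
  have T: "is_subring T" "T \<noteq> UNIV" using \<open>maximal_subring T\<close> by (simp_all add: maximal_subring_def)
  obtain u w where "u \<in> U" "u \<noteq> 0" "w \<in> W" "w \<noteq> 0"
    using U.exists_nonzero W.exists_nonzero by blast
  then have "stab_ring U \<noteq> UNIV" "stab_ring W \<noteq> UNIV"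
    using stab_ring_neq_UNIV inter by blast+
  then have "T \<subseteq> stab_ring U \<Longrightarrow> T = stab_ring U" "T \<subseteq> stab_ring W \<Longrightarrow> T = stab_ring W"
    using maximal_subring_eqI[OF \<open>maximal_subring T\<close> is_subring_stab_ring] U(1) W(1) by blast+
  moreover have "irreducible_action T" if "\<not> T \<subseteq> stab_ring U" "\<not> T \<subseteq> stab_ring W"
    using irreducible_action_if_not_stabilizing[OF T(1) \<open>t \<in> T\<close> that] .
  ultimately consider "T = stab_ring U" | "T = stab_ring W" | "irreducible_action T" by blast
  then show ?thesis
  proof cases
    case 3
    interpret type_T_irreducible t U W k T using T \<open>t \<in> T\<close> 3 by unfold_locales
    show ?thesis using typeII_if_maximal[OF \<open>maximal_subring T\<close>] by blast
  qed simp_all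
qed

end
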